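(* Let $\mathcal{X}=\mathbb{R}^2/\mathbb{Z}^2$, $\mathcal{H}=L^2(\mathcal{X})$, let $\psi\in C^\infty(\mathcal{X})$ and let $\varphi(x)=\psi(\cdot-x)$. Let $Z=(z_1,\dots,z_N)\in\mathcal{X}^N$ consist of pairwise distinct points, let $S_Z$ be the least interpolant space for first-order Hermite interpolation at $Z$, and let $L$ be the smallest integer such that every polynomial in $S_Z$ has degree at most $L$. Suppose that $\hat\psi(\alpha)\neq0$ for all $\alpha\in\mathbb{N}_0^2$ with $|\alpha|\le L$. Then $\{h(\partial)\varphi(0):h\in S_Z\}$ spans a subspace of dimension $3N$. Furthermore $L\le 2N-1$.
   Context: $\hat\psi(\alpha)=\int_{\mathcal{X}}\psi(x)e^{-2\pi i\langle\alpha,x\rangle}dx$. For a polynomial $P=\sum_k a_kX^k$, $P(\partial)=\sum_k a_k\partial_1^{k_1}\partial_2^{k_2}$. Least interpolant space: for a linear functional $F$ on polynomials in two variables, $g_F(x)=\sum_{\alpha}\frac{F(X^\alpha)}{\alpha!}x^\alpha$; the least term $g_\downarrow$ of a nonzero power series is its nonzero homogeneous component of lowest degree. For the functionals $P\mapsto P(z_i)$, $P\mapsto\partial_1P(z_i)$, $P\mapsto\partial_2P(z_i)$ ($i=1,\dots,N$), i.e. $e^{\langle z_i,x\rangle}$, $x_1e^{\langle z_i,x\rangle}$, $x_2e^{\langle z_i,x\rangle}$, $S_Z$ is the span of the least terms of all nonzero elements of the span of these $3N$ power series. *)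

theory Defs
  imports "HOL-Analysis.Analysis" "HOL-Library.Function_Algebras"
begin

definition pd1 :: "(real \<times> real \<Rightarrow> complex) \<Rightarrow> real \<times> real \<Rightarrow> complex" where
  "pd1 f x = vector_derivative (\<lambda>t. f (t, snd x)) (at (fst x))"

definition pd2 :: "(real \<times> real \<Rightarrow> complex) \<Rightarrow> real \<times> real \<Rightarrow> complex" where
  "pd2 f x = vector_derivative (\<lambda>t. f (fst x, t)) (at (snd x))"

definition pdiff :: "nat \<times> nat \<Rightarrow> (real \<times> real \<Rightarrow> complex) \<Rightarrow> real \<times> real \<Rightarrow> complex" where
  "pdiff a f = (pd1 ^^ fst a) ((pd2 ^^ snd a) f)"

fun iter_pd :: "bool list \<Rightarrow> (real \<times> real \<Rightarrow> complex) \<Rightarrow> real \<times> real \<Rightarrow> complex" where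
  "iter_pd [] f = f"
| "iter_pd (d # ds) f = (if d then pd1 else pd2) (iter_pd ds f)"

definition smooth2 :: "(real \<times> real \<Rightarrow> complex) \<Rightarrow> bool" where
  "smooth2 f \<longleftrightarrow> (\<forall>ds. iter_pd ds f differentiable_on UNIV)"

text \<open>functions on the torus R^2/Z^2 = Z^2-periodic functions on R^2\<close>
definition periodic2 :: "(real \<times> real \<Rightarrow> complex) \<Rightarrow> bool" where
  "periodic2 f \<longleftrightarrow> (\<forall>x k1 k2. f (x + (real_of_int k1, real_of_int k2)) = f x)"

definition fourier2 :: "(real \<times> real \<Rightarrow> complex) \<Rightarrow> nat \<times> nat \<Rightarrow> complex" where
  "fourier2 f a = integral (cbox (0,0) (1,1))
     (\<lambda>x. f x * exp (- 2 * of_real pi * \<i> *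
            of_real (real (fst a) * fst x + real (snd a) * snd x)))"

type_synonym coeffs2 = "nat \<times> nat \<Rightarrow> complex"

definition cscale :: "complex \<Rightarrow> ('a \<Rightarrow> complex) \<Rightarrow> 'a \<Rightarrow> complex" where
  "cscale c f = (\<lambda>x. c * f x)"

definition monom2 :: "nat \<times> nat \<Rightarrow> coeffs2" where
  "monom2 a = (\<lambda>b. if b = a then 1 else 0)"

definition poly2_eval :: "coeffs2 \<Rightarrow> real \<times> real \<Rightarrow> complex" where
  "poly2_eval p x = (\<Sum>b\<in>{b. p b \<noteq> 0}. p b * of_real (fst x) ^ fst b * of_real (snd x) ^ snd b)"

definition deg2 :: "coeffs2 \<Rightarrow> nat" where
  "deg2 p = Max ({fst b + snd b | b. p b \<noteq> 0} \<union> {0})"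

definition diff_op :: "coeffs2 \<Rightarrow> (real \<times> real \<Rightarrow> complex) \<Rightarrow> real \<times> real \<Rightarrow> complex" where
  "diff_op h f x = (\<Sum>a\<in>{a. h a \<noteq> 0}. h a * pdiff a f x)"

definition gF :: "(coeffs2 \<Rightarrow> complex) \<Rightarrow> coeffs2" where
  "gF F = (\<lambda>a. F (monom2 a) / of_nat (fact (fst a) * fact (snd a)))"

definition least_term :: "coeffs2 \<Rightarrow> coeffs2" where
  "least_term g = (\<lambda>a. if fst a + snd a = (LEAST d. \<exists>b. fst b + snd b = d \<and> g b \<noteq> 0)
                        then g a else 0)"

definition hermite_series_span :: "(nat \<Rightarrow> real \<times> real) \<Rightarrow> nat \<Rightarrow> coeffs2 set" where
  "hermite_series_span z N = {g. \<exists>u v w. g = (\<lambda>a. \<Sum>i<N.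
       u i * gF (\<lambda>p. poly2_eval p (z i)) a
     + v i * gF (\<lambda>p. pd1 (poly2_eval p) (z i)) a
     + w i * gF (\<lambda>p. pd2 (poly2_eval p) (z i)) a)}"

definition least_space :: "(nat \<Rightarrow> real \<times> real) \<Rightarrow> nat \<Rightarrow> coeffs2 set" where
  "least_space z N = module.span cscale
     {least_term g | g. g \<in> hermite_series_span z N \<and> g \<noteq> 0}"

definition least_deg_bound :: "(nat \<Rightarrow> real \<times> real) \<Rightarrow> nat \<Rightarrow> nat" where
  "least_deg_bound z N = (LEAST L. \<forall>h\<in>least_space z N. deg2 h \<le> L)"

end

theory Submission
  imports Defs "HOL-Computational_Algebra.Polynomial"
begin

text \<open>No nonzero combination of the \<open>3 * N\<close> Hermite series \<open>exp \<langle>z i, x\<rangle>\<close>,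
  \<open>x\<^sub>1 exp \<langle>z i, x\<rangle>\<close>, \<open>x\<^sub>2 exp \<langle>z i, x\<rangle>\<close> vanishes to order \<open>2 * N\<close>: applying the
  corresponding functional to an affine function times \<open>\<Prod>j\<noteq>i. \<langle>z i - z j, x - z j\<rangle>\<^sup>2\<close>, a
  polynomial of degree \<open>2 * N - 1\<close>, isolates the weights at \<open>z i\<close>. Hence the series are
  independent, their least terms have degree at most \<open>2 * N - 1\<close>, and filtering by order shows
  that the least terms span a space of the same dimension \<open>3 * N\<close>. Finally \<open>h \<mapsto> h(\<partial>)\<phi>(0)\<close>
  is injective on polynomials of degree at most \<open>L\<close>: its Fourier coefficient at \<open>\<alpha>\<close> is
  \<open>fourier2 \<psi> \<alpha> \<cdot> h(-2\<pi>i\<alpha>)\<close>, and a polynomial of degree at most \<open>L\<close> that vanishes on the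
  triangle \<open>{\<alpha> \<in> \<nat>\<^sup>2. \<alpha>\<^sub>1 + \<alpha>\<^sub>2 \<le> L}\<close> is zero, by taking finite differences.\<close>

section \<open>Linear algebra without finite dimensionality\<close>

context vector_space
begin

lemma independent_Un_direct:
  assumes A: "subspace A" and B: "subspace B" and AB: "A \<inter> B \<subseteq> {0}"
    and CA: "C \<subseteq> A" "independent C" "finite C" and DB: "D \<subseteq> B" "independent D" "finite D"
  shows "independent (C \<union> D)" and "C \<inter> D = {}"
proof -
  show disj: "C \<inter> D = {}"
    using CA DB AB dependent_zero by blast
  show "independent (C \<union> D)"
  proof (rule independent_if_scalars_zero)
    fix f x assume sum0: "(\<Sum>x\<in>C \<union> D. f x *s x) = 0" and x: "x \<in> C \<union> D"
    define a where "a = (\<Sum>x\<in>C. f x *s x)"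
    define b where "b = (\<Sum>x\<in>D. f x *s x)"
    have "a \<in> A" "b \<in> B"
      unfolding a_def b_def using A B CA(1) DB(1) by (auto intro: subspace_sum subspace_scale)
    moreover have "a + b = 0"
      using sum0 sum.union_disjoint[OF CA(3) DB(3) disj, of "\<lambda>x. f x *s x"]
      unfolding a_def b_def by simp
    then have "a = - b"
      by (simp add: eq_neg_iff_add_eq_0)
    ultimately have "a = 0" "b = 0"
      using AB B by (auto simp: subspace_neg)
    then show "f x = 0"
      using x CA DB unfolding a_def b_def independent_explicit_finite_subsets by blast
  qed (use CA DB in simp)
qed

lemma dim_Un_direct:
  assumes A: "subspace A" and B: "subspace B" and AB: "A \<inter> B \<subseteq> {0}"
    and FA: "A \<subseteq> span FA" "finite FA" and FB: "B \<subseteq> span FB" "finite FB"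
  shows "dim (A \<union> B) = dim A + dim B"
proof -
  obtain C where C: "C \<subseteq> A" "independent C" "A \<subseteq> span C" "card C = dim A"
    using basis_exists by blast
  obtain D where D: "D \<subseteq> B" "independent D" "B \<subseteq> span D" "card D = dim B"
    using basis_exists by blast
  have fin: "finite C" "finite D"
    using independent_span_bound FA FB C D by (meson order_trans)+
  note CD = independent_Un_direct[OF A B AB C(1,2) fin(1) D(1,2) fin(2)]
  have "span (C \<union> D) = span (A \<union> B)"
  proof (rule span_eq[THEN iffD2], rule conjI)
    show "C \<union> D \<subseteq> span (A \<union> B)"
      using C(1) D(1) span_superset by blast
    show "A \<union> B \<subseteq> span (C \<union> D)"
      using C(3) D(3) span_mono[of C "C \<union> D"] span_mono[of D "C \<union> D"] by blast
  qed
  then have "dim (A \<union> B) = card (C \<union> D)"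
    using dim_span[of "A \<union> B"] dim_span_eq_card_independent[OF CD(1)] by simp
  then show ?thesis
    using card_Un_disjoint[OF fin CD(2)] C(4) D(4) by simp
qed

lemma inj_on_independent_image_if_coeffs_unique:
  assumes I: "finite I" and unique: "\<And>c. (\<Sum>p\<in>I. scale (c p) (g p)) = 0 \<Longrightarrow> \<forall>p\<in>I. c p = 0"
  shows "inj_on g I" and "independent (g ` I)"
proof -
  show inj: "inj_on g I"
  proof (rule inj_onI, rule ccontr)
    fix p q assume pq: "p \<in> I" "q \<in> I" "g p = g q" "p \<noteq> q"
    define c where "c r = (if r = p then 1 else if r = q then -1 else (0 :: 'a))" for r
    have "(\<Sum>r\<in>I. scale (c r) (g r)) = (\<Sum>r\<in>{p, q}. scale (c r) (g r))"
      using pq I by (intro sum.mono_neutral_right) (auto simp: c_def)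
    also have "\<dots> = 0"
      using pq by (simp add: c_def)
    finally have "c p = 0"
      using unique pq(1) by blast
    then show False
      by (simp add: c_def)
  qed
  show "independent (g ` I)"
  proof (rule independent_if_scalars_zero)
    fix f x assume "(\<Sum>x\<in>g ` I. scale (f x) x) = 0" and x: "x \<in> g ` I"
    then have "(\<Sum>p\<in>I. scale (f (g p)) (g p)) = 0"
      by (simp add: sum.reindex[OF inj])
    then have "\<forall>p\<in>I. f (g p) = 0"
      by (rule unique)
    then show "f x = 0"
      using x by blast
  qed (use I in simp)
qed

lemma span_image_eq_range_sum:
  assumes I: "finite I" and inj: "inj_on g I"
  shows "span (g ` I) = range (\<lambda>c. \<Sum>p\<in>I. scale (c p) (g p))"
proof -
  have "span (g ` I) = range (\<lambda>u. \<Sum>p\<in>I. scale (u (g p)) (g p))"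
    using span_finite[of "g ` I"] I by (simp add: sum.reindex[OF inj])
  also have "\<dots> = range (\<lambda>c. \<Sum>p\<in>I. scale (c p) (g p))"
  proof (intro equalityI subsetI)
    fix y assume "y \<in> range (\<lambda>c. \<Sum>p\<in>I. scale (c p) (g p))"
    then obtain c where y: "y = (\<Sum>p\<in>I. scale (c p) (g p))"
      by blast
    have "y = (\<Sum>p\<in>I. scale ((c \<circ> the_inv_into I g) (g p)) (g p))"
      unfolding y by (intro sum.cong) (simp_all add: the_inv_into_f_f[OF inj])
    then show "y \<in> range (\<lambda>u. \<Sum>p\<in>I. scale (u (g p)) (g p))"
      by blast
  qed auto
  finally show ?thesis .
qed

lemma independent_if_independent_image:
  assumes f: "module_hom scale scale f" and inj: "inj_on f C" and ind: "independent (f ` C)"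
  shows "independent C"
proof
  interpret f: module_hom scale scale f by fact
  assume "dependent C"
  then obtain a where a: "a \<in> C" "a \<in> span (C - {a})"
    unfolding dependent_def by blast
  from a(2) have "f a \<in> span (f ` (C - {a}))"
    unfolding f.span_image by (rule imageI)
  also have "f ` (C - {a}) = f ` C - {f a}"
    using inj_on_image_set_diff[OF inj, of C "{a}"] a(1) by simp
  finally show False
    using ind a(1) unfolding dependent_def by blast
qed

lemma subspace_eq_span_lift_Un_kernel:
  assumes f: "module_hom scale scale f" and W: "subspace W" and C: "C \<subseteq> W" "f ` W \<subseteq> span (f ` C)"
  shows "W = span (span C \<union> (W \<inter> {x. f x = 0}))"
proof
  interpret f: module_hom scale scale f by fact
  have span_C: "span C \<subseteq> W"
    using C(1) W span_minimal by blast
  show "W \<subseteq> span (span C \<union> (W \<inter> {x. f x = 0}))"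
  proof
    fix w assume w: "w \<in> W"
    then obtain c where c: "c \<in> span C" "f c = f w"
      using C(2) f.span_image by (metis image_iff image_subset_iff)
    then have "w - c \<in> W \<inter> {x. f x = 0}"
      using w span_C W subspace_diff f.diff by auto
    then have "c + (w - c) \<in> span (span C \<union> (W \<inter> {x. f x = 0}))"
      using c(1) by (intro span_add) (auto intro: span_base)
    then show "w \<in> span (span C \<union> (W \<inter> {x. f x = 0}))"
      by simp
  qed
  show "span (span C \<union> (W \<inter> {x. f x = 0})) \<subseteq> W"
    using span_C W by (intro span_minimal) auto
qed

text \<open>A basis of \<open>f ` W\<close> lifted to \<open>W\<close> spans a complement of the kernel.\<close>

lemma dim_eq_dim_kernel_add_dim_image:
  assumes f: "module_hom scale scale f" and W: "subspace W" and F: "W \<subseteq> span F" "finite F"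
  shows "dim W = dim (W \<inter> {x. f x = 0}) + dim (f ` W)"
proof -
  interpret f: module_hom scale scale f by fact
  obtain D where D: "D \<subseteq> f ` W" "independent D" "f ` W \<subseteq> span D" "card D = dim (f ` W)"
    using basis_exists by blast
  have "f ` W \<subseteq> span (f ` F)"
    using F(1) f.spans_image by blast
  then have finD: "finite D"
    using independent_span_bound[OF finite_imageI[OF F(2)] D(2)] D(1) by blast
  obtain C where C: "C \<subseteq> W" "inj_on f C" "D = f ` C"
    using subset_image_inj[THEN iffD1, OF D(1)] by blast
  have inj: "inj_on f (span C)"
    using f.inj_on_span_independent_image[of C] C(2,3) D(2) by simp
  have indC: "independent C"
    using independent_if_independent_image[OF f C(2)] C(3) D(2) by simp
  have finC: "finite C"
    using finD C(2,3) finite_imageD by blast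
  define K where "K = W \<inter> {x. f x = 0}"
  have K: "subspace K"
    unfolding K_def using W f.subspace_kernel subspace_inter by blast
  have W_eq: "W = span (span C \<union> K)"
    unfolding K_def using subspace_eq_span_lift_Un_kernel[OF f W C(1)] D(3) C(3) by blast
  have "span C \<inter> K \<subseteq> {0}"
  proof
    fix x assume "x \<in> span C \<inter> K"
    then have "x \<in> span C" "f x = f 0"
      unfolding K_def by auto
    then show "x \<in> {0}"
      using inj_onD[OF inj] span_zero by blast
  qed
  moreover have "K \<subseteq> span F"
    using F(1) unfolding K_def by blast
  ultimately have "dim (span C \<union> K) = dim (span C) + dim K"
    by (intro dim_Un_direct[OF subspace_span K _ _ finC _ F(2)]) auto
  then have "dim W = dim (span C) + dim K"
    by (subst W_eq) (simp only: dim_span)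
  then show ?thesis
    using dim_span_eq_card_independent[OF indC] card_image[OF C(2)] C(3) D(4) K_def by simp
qed

end

lemma (in vector_space_pair) dim_image_eq_inj_on_span:
  assumes f: "Vector_Spaces.linear s1 s2 f" and inj: "inj_on f (vs1.span S)"
  shows "vs2.dim (f ` S) = vs1.dim S"
proof -
  interpret f: Vector_Spaces.linear s1 s2 f by fact
  obtain B where B: "B \<subseteq> S" "vs1.independent B" "S \<subseteq> vs1.span B" "card B = vs1.dim S"
    using vs1.basis_exists by blast
  then have "vs1.span S = vs1.span B"
    using vs1.span_mono[of B S] vs1.span_mono[of S "vs1.span B"] vs1.span_span[of B] by auto
  moreover have "card (f ` B) = card B"
    using inj card_image[of f B] inj_on_subset[of f "vs1.span S" B] B vs1.span_superset by auto
  ultimately show ?thesis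
    by (metis B(2,4) f.dependent_inj_imageD f.span_image inj vs2.dim_eq_card_independent vs2.dim_span)
qed

interpretation cs: vector_space "cscale :: complex \<Rightarrow> ('a \<Rightarrow> complex) \<Rightarrow> _"
  by unfold_locales (auto simp: cscale_def algebra_simps fun_eq_iff)

lemma cs_subspaceI:
  assumes "0 \<in> S" "\<And>x y. x \<in> S \<Longrightarrow> y \<in> S \<Longrightarrow> x + y \<in> S"
    and "\<And>c x. x \<in> S \<Longrightarrow> cscale c x \<in> S"
  shows "cs.subspace S"
  using assms unfolding cs.subspace_def by auto

lemma sum_fun_apply: "(\<Sum>i\<in>A. f i) x = (\<Sum>i\<in>A. f i x)"
  by (induction A rule: infinite_finite_induct) auto

section \<open>Orders and least terms of power series\<close>

definition ord2 :: "coeffs2 \<Rightarrow> nat" where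
  "ord2 g = (LEAST d. \<exists>b. fst b + snd b = d \<and> g b \<noteq> 0)"

definition ord_ge :: "nat \<Rightarrow> coeffs2 set" where
  "ord_ge d = {g. \<forall>a. fst a + snd a < d \<longrightarrow> g a = 0}"

definition deg_le :: "nat \<Rightarrow> coeffs2 set" where
  "deg_le d = {g. \<forall>a. d < fst a + snd a \<longrightarrow> g a = 0}"

definition homog_part :: "nat \<Rightarrow> coeffs2 \<Rightarrow> coeffs2" where
  "homog_part d g = (\<lambda>a. if fst a + snd a = d then g a else 0)"

definition indices_le :: "nat \<Rightarrow> (nat \<times> nat) set" where
  "indices_le d = {a. fst a + snd a \<le> d}"

definition least_terms :: "coeffs2 set \<Rightarrow> coeffs2 set" where
  "least_terms W = {least_term g | g. g \<in> W \<and> g \<noteq> 0}"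

lemma finite_indices_le: "finite (indices_le d)"
  by (rule finite_subset[of _ "{0..d} \<times> {0..d}"]) (auto simp: indices_le_def)

lemma subspace_ord_ge: "cs.subspace (ord_ge d)"
  by (rule cs_subspaceI) (auto simp: ord_ge_def cscale_def)

lemma subspace_deg_le: "cs.subspace (deg_le d)"
  by (rule cs_subspaceI) (auto simp: deg_le_def cscale_def)

lemma module_hom_homog_part: "module_hom cscale cscale (homog_part d)"
  unfolding module_hom_iff by (auto simp: homog_part_def cscale_def fun_eq_iff cs.module_axioms)

lemma least_term_eq_homog_part: "least_term g = homog_part (ord2 g) g"
  unfolding least_term_def homog_part_def ord2_def by simp

lemma ord2_le: "g b \<noteq> 0 \<Longrightarrow> ord2 g \<le> fst b + snd b"
  unfolding ord2_def by (rule Least_le) blast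

lemma ord2_ge: "g \<in> ord_ge d \<Longrightarrow> g \<noteq> 0 \<Longrightarrow> d \<le> ord2 g"
proof -
  assume g: "g \<in> ord_ge d" "g \<noteq> 0"
  from g(2) obtain c where "g c \<noteq> 0"
    by (auto simp: fun_eq_iff)
  then have "\<exists>b. fst b + snd b = ord2 g \<and> g b \<noteq> 0"
    using LeastI_ex[of "\<lambda>d. \<exists>b. fst b + snd b = d \<and> g b \<noteq> 0"] \<open>g c \<noteq> 0\<close>
    unfolding ord2_def by blast
  then obtain b where b: "fst b + snd b = ord2 g" "g b \<noteq> 0"
    by blast
  show ?thesis
  proof (rule ccontr)
    assume "\<not> d \<le> ord2 g"
    then have "fst b + snd b < d"
      using b(1) by simp
    then show False
      using g(1) b(2) unfolding ord_ge_def by blast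
  qed
qed

lemma homog_part_eq_0_iff:
  assumes "g \<in> ord_ge d"
  shows "homog_part d g = 0 \<longleftrightarrow> g \<in> ord_ge (Suc d)"
  using assms unfolding ord_ge_def homog_part_def fun_eq_iff by (auto simp: less_Suc_eq)

lemma least_term_eq_homog_part_ord_ge:
  assumes g: "g \<in> ord_ge d" and h: "homog_part d g \<noteq> 0"
  shows "least_term g = homog_part d g"
proof -
  obtain b where "fst b + snd b = d" "g b \<noteq> 0"
    using h unfolding homog_part_def by (auto simp: fun_eq_iff split: if_splits)
  then have "ord2 g = d"
    using ord2_le[of g b] ord2_ge[OF g] by fastforce
  then show ?thesis
    by (simp add: least_term_eq_homog_part)
qed

lemma least_term_ord_ge: "g \<in> ord_ge d \<Longrightarrow> g \<noteq> 0 \<Longrightarrow> least_term g \<in> ord_ge d"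
  using ord2_ge[of g d] unfolding least_term_eq_homog_part homog_part_def ord_ge_def by auto

lemma homog_part_in_deg_le: "d \<le> K \<Longrightarrow> homog_part d g \<in> deg_le K"
  unfolding homog_part_def deg_le_def by auto

lemma least_terms_deg_le:
  assumes "W \<inter> ord_ge (Suc K) \<subseteq> {0}"
  shows "least_terms W \<subseteq> deg_le K"
proof
  fix x assume "x \<in> least_terms W"
  then obtain w where w: "x = least_term w" "w \<in> W" "w \<noteq> 0"
    unfolding least_terms_def by auto
  then have "w \<notin> ord_ge (Suc K)"
    using assms by blast
  then obtain a where "fst a + snd a < Suc K" "w a \<noteq> 0"
    unfolding ord_ge_def by blast
  then have "ord2 w \<le> K"
    using ord2_le[of w a] by simp
  then show "x \<in> deg_le K"
    using w(1) homog_part_in_deg_le by (simp add: least_term_eq_homog_part)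
qed

lemma deg_le_subset_span: "deg_le K \<subseteq> cs.span (monom2 ` indices_le K)"
proof
  fix g assume g: "g \<in> deg_le K"
  have "g = (\<Sum>a\<in>indices_le K. cscale (g a) (monom2 a))"
  proof
    fix b
    have "(\<Sum>a\<in>indices_le K. cscale (g a) (monom2 a)) b = (if b \<in> indices_le K then g b else 0)"
      by (simp add: cscale_def sum_fun_apply monom2_def finite_indices_le if_distrib sum.delta
          cong: if_cong)
    then show "g b = (\<Sum>a\<in>indices_le K. cscale (g a) (monom2 a)) b"
      using g unfolding deg_le_def indices_le_def by (cases b) auto
  qed
  also have "\<dots> \<in> cs.span (monom2 ` indices_le K)"
    by (intro cs.span_sum cs.span_scale cs.span_base) auto
  finally show "g \<in> cs.span (monom2 ` indices_le K)" .
qed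

lemma homog_part_ord_ge_Suc:
  assumes "homog_part d g \<in> ord_ge (Suc d)"
  shows "homog_part d g = 0"
proof
  fix a
  show "homog_part d g a = 0 a"
    using assms[unfolded ord_ge_def, THEN CollectD, rule_format, of a]
    by (auto simp: homog_part_def)
qed

lemma span_least_terms_split:
  assumes "V \<subseteq> ord_ge d"
  shows "cs.span (least_terms V) =
    cs.span (homog_part d ` V \<union> cs.span (least_terms (V \<inter> ord_ge (Suc d))))"
  unfolding cs.span_eq
proof
  show "least_terms V \<subseteq> cs.span (homog_part d ` V \<union> cs.span (least_terms (V \<inter> ord_ge (Suc d))))"
  proof
    fix x assume "x \<in> least_terms V"
    then obtain w where w: "x = least_term w" "w \<in> V" "w \<noteq> 0"
      unfolding least_terms_def by blast
    show "x \<in> cs.span (homog_part d ` V \<union> cs.span (least_terms (V \<inter> ord_ge (Suc d))))"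
    proof (cases "homog_part d w = 0")
      case True
      then have "x \<in> least_terms (V \<inter> ord_ge (Suc d))"
        using w assms homog_part_eq_0_iff unfolding least_terms_def by blast
      then show ?thesis
        by (intro cs.span_base) (auto intro: cs.span_base)
    next
      case False
      then have "x \<in> homog_part d ` V"
        using w least_term_eq_homog_part_ord_ge assms by blast
      then show ?thesis
        by (intro cs.span_base) blast
    qed
  qed
  have "homog_part d ` V \<subseteq> cs.span (least_terms V)"
  proof
    fix x assume "x \<in> homog_part d ` V"
    then obtain w where w: "x = homog_part d w" "w \<in> V"
      by blast
    show "x \<in> cs.span (least_terms V)"
    proof (cases "x = 0")
      case False
      have "w \<noteq> 0"
        using False w(1) by (auto simp: homog_part_def zero_fun_def)
      moreover have "x = least_term w"
        using least_term_eq_homog_part_ord_ge[of w d] False w assms by auto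
      ultimately have "x \<in> least_terms V"
        using w(2) unfolding least_terms_def by blast
      then show ?thesis
        by (rule cs.span_base)
    qed (simp add: cs.span_zero)
  qed
  moreover have "cs.span (least_terms (V \<inter> ord_ge (Suc d))) \<subseteq> cs.span (least_terms V)"
    by (rule cs.span_mono) (auto simp: least_terms_def)
  ultimately show "homog_part d ` V \<union> cs.span (least_terms (V \<inter> ord_ge (Suc d))) \<subseteq> cs.span (least_terms V)"
    by blast
qed

lemma homog_part_Int_span_least_terms:
  "homog_part d ` V \<inter> cs.span (least_terms (V \<inter> ord_ge (Suc d))) \<subseteq> {0}"
proof -
  have "least_terms (V \<inter> ord_ge (Suc d)) \<subseteq> ord_ge (Suc d)"
    unfolding least_terms_def using least_term_ord_ge by blast
  then have "cs.span (least_terms (V \<inter> ord_ge (Suc d))) \<subseteq> ord_ge (Suc d)"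
    using subspace_ord_ge cs.span_minimal by blast
  then show ?thesis
    using homog_part_ord_ge_Suc by blast
qed

lemma span_least_terms_subset:
  assumes "W \<inter> ord_ge (Suc K) \<subseteq> {0}"
  shows "cs.span (least_terms W) \<subseteq> cs.span (monom2 ` indices_le K)"
proof (rule cs.span_minimal[OF _ cs.subspace_span])
  show "least_terms W \<subseteq> cs.span (monom2 ` indices_le K)"
    using least_terms_deg_le[OF assms] deg_le_subset_span by blast
qed

text \<open>Downward induction on the order \<open>d\<close>: the homogeneous parts of degree \<open>d\<close> contribute the same
  dimension to \<open>W\<close> (rank-nullity for \<open>homog_part d\<close>) and to the span of its least terms (a direct
  summand).\<close>

lemma dim_least_terms:
  assumes G: "finite G" and W: "cs.subspace W" "W \<subseteq> cs.span G"
    and bounded: "W \<inter> ord_ge (Suc K) \<subseteq> {0}"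
  shows "cs.dim (least_terms W) = cs.dim W"
proof -
  have "cs.dim (least_terms V) = cs.dim V"
    if "d \<le> Suc K" "cs.subspace V" "V \<subseteq> W" "V \<subseteq> ord_ge d" for d V
    using that
  proof (induction d arbitrary: V rule: inc_induct)
    case base
    then have "V \<subseteq> cs.span {}"
      using bounded by auto
    moreover have "least_terms V = {}"
      using calculation unfolding least_terms_def by auto
    ultimately show ?case
      using cs.dim_le_card[of V "{}"] cs.dim_le_card[of "{}" "{}"] by simp
  next
    case (step d)
    define V' where "V' = V \<inter> ord_ge (Suc d)"
    define A where "A = homog_part d ` V"
    have V': "cs.subspace V'"
      unfolding V'_def using step.prems(1) subspace_ord_ge cs.subspace_inter by blast
    have V'_kernel: "V' = V \<inter> {x. homog_part d x = 0}"
      unfolding V'_def using step.prems(3) homog_part_eq_0_iff by blast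
    have dim_V: "cs.dim V = cs.dim V' + cs.dim A"
      unfolding V'_kernel A_def using step.prems(1,2) W(2)
      by (intro cs.dim_eq_dim_kernel_add_dim_image[OF module_hom_homog_part _ _ G]) auto
    have IH: "cs.dim (least_terms V') = cs.dim V'"
      using step.IH[OF V'] step.prems(2) unfolding V'_def by blast
    have A: "cs.subspace A"
      unfolding A_def by (rule module_hom.subspace_image[OF module_hom_homog_part step.prems(1)])
    have direct: "A \<inter> cs.span (least_terms V') \<subseteq> {0}"
      unfolding A_def V'_def by (rule homog_part_Int_span_least_terms)
    have span_V': "cs.span (least_terms V') \<subseteq> cs.span (monom2 ` indices_le K)"
      using bounded step.prems(2) unfolding V'_def by (intro span_least_terms_subset) blast
    have "d \<le> K"
      using step.hyps(2) by simp
    then have span_A: "A \<subseteq> cs.span (monom2 ` indices_le K)"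
      unfolding A_def using homog_part_in_deg_le deg_le_subset_span by blast
    have "cs.dim (least_terms V) = cs.dim (A \<union> cs.span (least_terms V'))"
      unfolding A_def V'_def by (rule cs.span_eq_dim[OF span_least_terms_split[OF step.prems(3)]])
    also have "\<dots> = cs.dim A + cs.dim (cs.span (least_terms V'))"
      using finite_indices_le
      by (intro cs.dim_Un_direct[OF A cs.subspace_span direct span_A _ span_V']) auto
    finally show ?case
      using IH dim_V by simp
  qed
  from this[of 0 W] show ?thesis
    using W unfolding ord_ge_def by simp
qed

section \<open>Polynomial functions of bounded total degree\<close>

inductive poly_fun2 :: "nat \<Rightarrow> ('a::comm_ring_1 \<times> 'a \<Rightarrow> 'a) \<Rightarrow> bool" where
  const: "poly_fun2 d (\<lambda>x. c)"
| mult_fst: "poly_fun2 d P \<Longrightarrow> poly_fun2 (Suc d) (\<lambda>x. fst x * P x)"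
| mult_snd: "poly_fun2 d P \<Longrightarrow> poly_fun2 (Suc d) (\<lambda>x. snd x * P x)"
| add: "poly_fun2 d P \<Longrightarrow> poly_fun2 d Q \<Longrightarrow> poly_fun2 d (\<lambda>x. P x + Q x)"
| smult: "poly_fun2 d P \<Longrightarrow> poly_fun2 d (\<lambda>x. c * P x)"
| Suc: "poly_fun2 d P \<Longrightarrow> poly_fun2 (Suc d) P"

lemma poly_fun2_mono:
  assumes "poly_fun2 d P" "d \<le> e"
  shows "poly_fun2 e P"
  using assms(2,1) by (induction e rule: dec_induct) (auto intro: poly_fun2.Suc)

lemma poly_fun2_monomial: "poly_fun2 (i + j) (\<lambda>x. fst x ^ i * snd x ^ j)"
proof (induction i)
  case 0
  show ?case
  proof (induction j)
    case 0
    show ?case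
      using poly_fun2.const[of 0 1] by simp
  next
    case (Suc j)
    then show ?case
      using poly_fun2.mult_snd[OF Suc.IH] by (simp add: algebra_simps)
  qed
next
  case (Suc i)
  then show ?case
    using poly_fun2.mult_fst[OF Suc.IH] by (simp add: algebra_simps)
qed

lemma poly_fun2_sum:
  "finite A \<Longrightarrow> (\<And>a. a \<in> A \<Longrightarrow> poly_fun2 d (f a)) \<Longrightarrow> poly_fun2 d (\<lambda>x. \<Sum>a\<in>A. f a x)"
  by (induction A rule: finite_induct) (auto intro: poly_fun2.intros poly_fun2.const[of d 0, simplified])

lemma poly_fun2_affine: "poly_fun2 1 (\<lambda>x. \<alpha> * fst x + \<beta> * snd x + \<gamma>)"
proof -
  have "poly_fun2 (Suc 0) (\<lambda>x. \<alpha> * (fst x * 1) + \<beta> * (snd x * 1) + \<gamma>)"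
    by (intro poly_fun2.add poly_fun2.smult poly_fun2.mult_fst poly_fun2.mult_snd poly_fun2.const)
  then show ?thesis
    by simp
qed

lemma poly_fun2_mult:
  assumes "poly_fun2 d P" "poly_fun2 e Q"
  shows "poly_fun2 (d + e) (\<lambda>x. P x * Q x)"
  using assms(1)
proof (induction rule: poly_fun2.induct)
  case (const d c)
  show ?case
    using poly_fun2_mono[OF poly_fun2.smult[OF assms(2)]] by simp
next
  case (mult_fst d P)
  then show ?case
    using poly_fun2.mult_fst by (fastforce simp: mult.assoc)
next
  case (mult_snd d P)
  then show ?case
    using poly_fun2.mult_snd by (fastforce simp: mult.assoc)
next
  case (add d P P')
  then show ?case
    using poly_fun2.add by (fastforce simp: distrib_right)
next
  case (smult d P c)
  then show ?case
    using poly_fun2.smult by (fastforce simp: mult.assoc)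
qed (auto intro: poly_fun2.Suc)

lemma poly_fun2_prod:
  assumes "finite J" and "\<And>j. j \<in> J \<Longrightarrow> poly_fun2 d (f j)"
  shows "poly_fun2 (d * card J) (\<lambda>x. \<Prod>j\<in>J. f j x)"
  using assms
proof (induction J rule: finite_induct)
  case empty
  show ?case
    using poly_fun2.const[of 0 1] by simp
next
  case (insert j J)
  then show ?case
    using poly_fun2_mult[of d "f j" "d * card J"] by simp
qed

lemma poly_fun2_shift: "poly_fun2 d P \<Longrightarrow> poly_fun2 d (\<lambda>x. P (x + s))"
proof (induction rule: poly_fun2.induct)
  case (mult_fst d P)
  have "poly_fun2 (Suc d) (\<lambda>x. fst x * P (x + s) + fst s * P (x + s))"
    using mult_fst.IH by (intro poly_fun2.intros)
  then show ?case
    by (simp add: algebra_simps)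
next
  case (mult_snd d P)
  have "poly_fun2 (Suc d) (\<lambda>x. snd x * P (x + s) + snd s * P (x + s))"
    using mult_snd.IH by (intro poly_fun2.intros)
  then show ?case
    by (simp add: algebra_simps)
qed (auto intro: poly_fun2.intros)

lemma poly_fun2_0_const: "poly_fun2 d P \<Longrightarrow> d = 0 \<Longrightarrow> \<exists>c. P = (\<lambda>x. c)"
  by (induction rule: poly_fun2.induct) auto

lemma poly_fun2_difference_mult:
  fixes l :: "'a::comm_ring_1 \<times> 'a \<Rightarrow> 'a"
  assumes P: "poly_fun2 d P" and diff: "poly_fun2 (d - 1) (\<lambda>x. P (x + s) - P x)"
    and l: "\<And>x. l (x + s) = l x + c" "\<And>d Q. poly_fun2 d Q \<Longrightarrow> poly_fun2 (Suc d) (\<lambda>x. l x * Q x)"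
  shows "poly_fun2 d (\<lambda>x. l (x + s) * P (x + s) - l x * P x)"
proof -
  have "poly_fun2 d (\<lambda>x. l x * (P (x + s) - P x))"
  proof (cases d)
    case 0
    then obtain a where "P = (\<lambda>x. a)"
      using poly_fun2_0_const P by blast
    then show ?thesis
      using poly_fun2.const[of d 0] by simp
  next
    case (Suc e)
    then show ?thesis
      using l(2)[OF diff] by simp
  qed
  from poly_fun2.add[OF this poly_fun2.smult[OF poly_fun2_shift[OF P, of s], of c]]
  show ?thesis
    using l(1) by (simp add: algebra_simps)
qed

lemma poly_fun2_difference:
  "poly_fun2 d P \<Longrightarrow> poly_fun2 (d - 1) (\<lambda>x. P (x + s) - P x)"
proof (induction rule: poly_fun2.induct)
  case (const d c)
  show ?case
    using poly_fun2.const[of _ 0] by simp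
next
  case (mult_fst d P)
  show ?case
    using poly_fun2_difference_mult[OF mult_fst.hyps mult_fst.IH _ poly_fun2.mult_fst] by simp
next
  case (mult_snd d P)
  show ?case
    using poly_fun2_difference_mult[OF mult_snd.hyps mult_snd.IH _ poly_fun2.mult_snd] by simp
next
  case (add d P Q)
  then have "poly_fun2 (d - 1) (\<lambda>x. (P (x + s) - P x) + (Q (x + s) - Q x))"
    by (intro poly_fun2.add)
  then show ?case
    by (simp add: algebra_simps)
next
  case (smult d P c)
  then have "poly_fun2 (d - 1) (\<lambda>x. c * (P (x + s) - P x))"
    by (intro poly_fun2.smult)
  then show ?case
    by (simp add: algebra_simps)
next
  case (Suc d P)
  then show ?case
    using poly_fun2_mono[of "d - 1" _ d] by simp
qed

lemma poly_fun2_vanish_on_grid: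
  fixes P :: "'a::comm_ring_1 \<times> 'a \<Rightarrow> 'a"
  assumes "poly_fun2 d P" and "\<And>k l. k + l \<le> d \<Longrightarrow> P (c * of_nat k, c * of_nat l) = 0"
  shows "P (c * of_nat k, c * of_nat l) = 0"
  using assms
proof (induction d arbitrary: P k l)
  case 0
  then obtain a where "P = (\<lambda>x. a)"
    using poly_fun2_0_const by blast
  then show ?case
    using "0.prems"(2)[of 0 0] by simp
next
  case (Suc d)
  have shift: "(c * of_nat k, c * of_nat l) + (c, 0) = (c * of_nat (Suc k), c * of_nat l)"
    "(c * of_nat k, c * of_nat l) + (0, c) = (c * of_nat k, c * of_nat (Suc l))" for k l
    by (simp_all add: algebra_simps)
  have step: "P ((c * of_nat k, c * of_nat l) + s) = P (c * of_nat k, c * of_nat l)"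
    if s: "s \<in> {(c, 0), (0, c)}" for s k l
  proof -
    have "(\<lambda>x. P (x + s) - P x) (c * of_nat k, c * of_nat l) = 0"
    proof (rule Suc.IH)
      show "poly_fun2 d (\<lambda>x. P (x + s) - P x)"
        using poly_fun2_difference[OF Suc.prems(1)] by simp
      show "(\<lambda>x. P (x + s) - P x) (c * of_nat k, c * of_nat l) = 0" if "k + l \<le> d" for k l
        using that s Suc.prems(2)[of k l] Suc.prems(2)[of "Suc k" l] Suc.prems(2)[of k "Suc l"]
        by (auto simp: algebra_simps)
    qed
    then show ?thesis
      by simp
  qed
  have step1: "P (c * of_nat (Suc k), c * of_nat l) = P (c * of_nat k, c * of_nat l)"
    and step2: "P (c * of_nat k, c * of_nat (Suc l)) = P (c * of_nat k, c * of_nat l)" for k l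
    using step[of "(c, 0)" k l] step[of "(0, c)" k l] unfolding shift by simp_all
  have "P (c * of_nat 0, c * of_nat l) = 0"
    by (induction l) (use Suc.prems(2)[of 0 0] step2[of 0] in simp_all)
  then show ?case
    by (induction k) (use step1 in simp_all)
qed

lemma coeffs_eq_0_if_vanish_on_multiples:
  fixes b :: "nat \<Rightarrow> complex"
  assumes c: "c \<noteq> 0" and vanish: "\<And>n. (\<Sum>i\<le>L. b i * (c * of_nat n) ^ i) = 0" and i: "i \<le> L"
  shows "b i = 0"
proof -
  define p where "p = (\<Sum>j\<le>L. monom (b j) j)"
  have "p = 0"
  proof (rule ccontr)
    assume "p \<noteq> 0"
    then have "finite {x. poly p x = 0}"
      by (rule poly_roots_finite)
    moreover have "range (\<lambda>n::nat. c * of_nat n) \<subseteq> {x. poly p x = 0}"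
      using vanish unfolding p_def by (auto simp: poly_sum poly_monom)
    moreover have "inj (\<lambda>n::nat. c * of_nat n)"
      using c by (auto simp: inj_def)
    ultimately show False
      using finite_subset finite_imageD infinite_UNIV_nat by blast
  qed
  moreover have "coeff p i = b i"
    unfolding p_def using i by (simp add: coeff_sum coeff_monom)
  ultimately show "b i = 0"
    by simp
qed

definition cpoly_eval :: "coeffs2 \<Rightarrow> complex \<times> complex \<Rightarrow> complex" where
  "cpoly_eval h x = (\<Sum>a\<in>{a. h a \<noteq> 0}. h a * fst x ^ fst a * snd x ^ snd a)"

lemma support_deg_le: "h \<in> deg_le L \<Longrightarrow> {a. h a \<noteq> 0} \<subseteq> indices_le L"
  unfolding deg_le_def indices_le_def by (force simp: not_le[symmetric])

lemma cpoly_eval_deg_le: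
  assumes "h \<in> deg_le L"
  shows "cpoly_eval h x = (\<Sum>a\<in>indices_le L. h a * fst x ^ fst a * snd x ^ snd a)"
  unfolding cpoly_eval_def
  by (rule sum.mono_neutral_left[OF finite_indices_le support_deg_le[OF assms]]) auto

lemma poly_fun2_cpoly_eval:
  assumes "h \<in> deg_le L"
  shows "poly_fun2 L (cpoly_eval h)"
proof -
  have "poly_fun2 L (\<lambda>x. h a * (fst x ^ fst a * snd x ^ snd a))" if "a \<in> indices_le L" for a
    using that poly_fun2_mono[OF poly_fun2_monomial] by (intro poly_fun2.smult) (simp add: indices_le_def)
  then have "poly_fun2 L (\<lambda>x. \<Sum>a\<in>indices_le L. h a * (fst x ^ fst a * snd x ^ snd a))"
    by (intro poly_fun2_sum[OF finite_indices_le])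
  then show ?thesis
    unfolding cpoly_eval_deg_le[OF assms, abs_def] by (simp add: mult.assoc)
qed

lemma deg_le_eq_0_if_vanish_on_lattice:
  fixes c :: complex
  assumes c: "c \<noteq> 0" and h: "h \<in> deg_le L"
    and vanish: "\<And>k l. cpoly_eval h (c * of_nat k, c * of_nat l) = 0"
  shows "h = 0"
proof
  fix a
  have eval: "cpoly_eval h x = (\<Sum>j\<le>L. (\<Sum>i\<le>L. h (i, j) * fst x ^ i) * snd x ^ j)" for x
  proof -
    have "cpoly_eval h x = (\<Sum>a\<in>indices_le L. h a * fst x ^ fst a * snd x ^ snd a)"
      by (rule cpoly_eval_deg_le[OF h])
    also have "\<dots> = (\<Sum>a\<in>{..L} \<times> {..L}. h a * fst x ^ fst a * snd x ^ snd a)"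
      using h by (intro sum.mono_neutral_left) (auto simp: indices_le_def deg_le_def)
    also have "\<dots> = (\<Sum>i\<le>L. \<Sum>j\<le>L. h (i, j) * fst x ^ i * snd x ^ j)"
      by (subst sum.cartesian_product) (simp add: case_prod_beta')
    also have "\<dots> = (\<Sum>j\<le>L. \<Sum>i\<le>L. h (i, j) * fst x ^ i * snd x ^ j)"
      by (rule sum.swap)
    finally show ?thesis
      by (simp add: sum_distrib_right)
  qed
  have inner: "(\<Sum>i\<le>L. h (i, j) * (c * of_nat k) ^ i) = 0" if "j \<le> L" for j k
    by (rule coeffs_eq_0_if_vanish_on_multiples[where b = "\<lambda>j. \<Sum>i\<le>L. h (i, j) * (c * of_nat k) ^ i",
          OF c _ that]) (use vanish eval in simp)
  show "h a = 0 a"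
  proof (cases "fst a \<le> L \<and> snd a \<le> L")
    case True
    then show ?thesis
      using coeffs_eq_0_if_vanish_on_multiples[where b = "\<lambda>i. h (i, snd a)", OF c inner]
      by (cases a) simp
  next
    case False
    then show ?thesis
      using h unfolding deg_le_def by (cases a) auto
  qed
qed

lemma deg_le_eq_0_if_vanish_on_triangle:
  fixes c :: complex
  assumes c: "c \<noteq> 0" and h: "h \<in> deg_le L"
    and vanish: "\<And>k l. k + l \<le> L \<Longrightarrow> cpoly_eval h (c * of_nat k, c * of_nat l) = 0"
  shows "h = 0"
  using poly_fun2_vanish_on_grid[OF poly_fun2_cpoly_eval[OF h] vanish]
  by (rule deg_le_eq_0_if_vanish_on_lattice[OF c h])

section \<open>Partial derivatives\<close>

lemma has_vector_derivative_lines: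
  assumes "(F has_derivative F') (at p)"
  shows "((\<lambda>s. F (s, snd p)) has_vector_derivative F' (1, 0)) (at (fst p))"
    and "((\<lambda>s. F (fst p, s)) has_vector_derivative F' (0, 1)) (at (snd p))"
proof -
  have lines: "((\<lambda>s. (s, snd p)) has_derivative (\<lambda>s. (s, 0))) (at (fst p))"
    "((\<lambda>s. (fst p, s)) has_derivative (\<lambda>s. (0, s))) (at (snd p))"
    by (auto intro!: derivative_eq_intros)
  have "(\<lambda>s. F' (s, 0)) = (\<lambda>s. s *\<^sub>R F' (1, 0))" "(\<lambda>s. F' (0, s)) = (\<lambda>s. s *\<^sub>R F' (0, 1))"
  proof (rule_tac [!] ext)
    fix s :: real
    show "F' (s, 0) = s *\<^sub>R F' (1, 0)" "F' (0, s) = s *\<^sub>R F' (0, 1)"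
      using linear_scale[OF has_derivative_linear[OF assms], of s "(1, 0)"]
        linear_scale[OF has_derivative_linear[OF assms], of s "(0, 1)"] by simp_all
  qed
  then show "((\<lambda>s. F (s, snd p)) has_vector_derivative F' (1, 0)) (at (fst p))"
    and "((\<lambda>s. F (fst p, s)) has_vector_derivative F' (0, 1)) (at (snd p))"
    using has_derivative_compose[OF lines(1), of F F'] has_derivative_compose[OF lines(2), of F F']
      assms unfolding has_vector_derivative_def by simp_all
qed

lemma pd1_pd2_eq_derivative:
  assumes "(F has_derivative F') (at p)"
  shows "pd1 F p = F' (1, 0)" and "pd2 F p = F' (0, 1)"
  unfolding pd1_def pd2_def
  by (intro vector_derivative_at has_vector_derivative_lines[OF assms])+

lemma pd_add:
  assumes F: "F differentiable (at p)" and G: "G differentiable (at p)"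
  shows "pd1 (\<lambda>x. F x + G x) p = pd1 F p + pd1 G p"
    and "pd2 (\<lambda>x. F x + G x) p = pd2 F p + pd2 G p"
proof -
  obtain F' G' where F': "(F has_derivative F') (at p)" and G': "(G has_derivative G') (at p)"
    using F G unfolding differentiable_def by blast
  show "pd1 (\<lambda>x. F x + G x) p = pd1 F p + pd1 G p"
    and "pd2 (\<lambda>x. F x + G x) p = pd2 F p + pd2 G p"
    using pd1_pd2_eq_derivative[OF has_derivative_add[OF F' G']]
      pd1_pd2_eq_derivative[OF F'] pd1_pd2_eq_derivative[OF G'] by simp_all
qed

lemma pd_mult:
  fixes F G :: "real \<times> real \<Rightarrow> complex"
  assumes F: "F differentiable (at p)" and G: "G differentiable (at p)"
  shows "pd1 (\<lambda>x. F x * G x) p = pd1 F p * G p + F p * pd1 G p"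
    and "pd2 (\<lambda>x. F x * G x) p = pd2 F p * G p + F p * pd2 G p"
proof -
  obtain F' G' where F': "(F has_derivative F') (at p)" and G': "(G has_derivative G') (at p)"
    using F G unfolding differentiable_def by blast
  show "pd1 (\<lambda>x. F x * G x) p = pd1 F p * G p + F p * pd1 G p"
    and "pd2 (\<lambda>x. F x * G x) p = pd2 F p * G p + F p * pd2 G p"
    using pd1_pd2_eq_derivative[OF has_derivative_mult[OF F' G']]
      pd1_pd2_eq_derivative[OF F'] pd1_pd2_eq_derivative[OF G'] by simp_all
qed

lemma pd_const: "pd1 (\<lambda>x. c) p = 0" "pd2 (\<lambda>x. c) p = 0"
  using pd1_pd2_eq_derivative[OF has_derivative_const] by simp_all

lemma pd_affine:
  "pd1 (\<lambda>x. complex_of_real (\<alpha> * fst x + \<beta> * snd x + \<gamma>)) p = \<alpha>"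
  "pd2 (\<lambda>x. complex_of_real (\<alpha> * fst x + \<beta> * snd x + \<gamma>)) p = \<beta>"
proof -
  have "((\<lambda>x. complex_of_real (\<alpha> * fst x + \<beta> * snd x + \<gamma>)) has_derivative
      (\<lambda>h. complex_of_real (\<alpha> * fst h + \<beta> * snd h))) (at p)"
    by (auto intro!: derivative_eq_intros)
  from pd1_pd2_eq_derivative[OF this] show
    "pd1 (\<lambda>x. complex_of_real (\<alpha> * fst x + \<beta> * snd x + \<gamma>)) p = \<alpha>"
    "pd2 (\<lambda>x. complex_of_real (\<alpha> * fst x + \<beta> * snd x + \<gamma>)) p = \<beta>"
    by simp_all
qed

lemma differentiable_poly_fun2:
  fixes P :: "real \<times> real \<Rightarrow> real"
  assumes "poly_fun2 d P"
  shows "(\<lambda>x. complex_of_real (P x)) differentiable (at p)"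
  using assms
proof (induction rule: poly_fun2.induct)
  case (mult_fst d P)
  have "(\<lambda>x. complex_of_real (fst x)) differentiable (at p)"
    by (auto intro!: differentiableI derivative_eq_intros)
  with mult_fst.IH show ?case
    by (auto intro!: derivative_intros)
next
  case (mult_snd d P)
  have "(\<lambda>x. complex_of_real (snd x)) differentiable (at p)"
    by (auto intro!: differentiableI derivative_eq_intros)
  with mult_snd.IH show ?case
    by (auto intro!: derivative_intros)
qed (auto intro!: derivative_intros)

lemma pd_vanish_square_factor:
  fixes L S :: "real \<times> real \<Rightarrow> complex"
  assumes L: "L differentiable (at p)" and S: "S differentiable (at p)" and zero: "L p = 0"
  shows "pd1 (\<lambda>x. L x * (L x * S x)) p = 0" and "pd2 (\<lambda>x. L x * (L x * S x)) p = 0"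
  using pd_mult[OF L differentiable_mult[OF L S]] zero by simp_all

lemma pd_reflect:
  assumes "G differentiable (at (y - x))"
  shows "pd1 (\<lambda>x. c * G (y - x)) x = - c * pd1 G (y - x)"
    and "pd2 (\<lambda>x. c * G (y - x)) x = - c * pd2 G (y - x)"
proof -
  obtain G' where G': "(G has_derivative G') (at (y - x))"
    using assms unfolding differentiable_def by blast
  have "((\<lambda>x. y - x) has_derivative (\<lambda>h. - h)) (at x)"
    by (auto intro!: derivative_eq_intros)
  from has_derivative_compose[OF this G'] have
    "((\<lambda>x. c * G (y - x)) has_derivative (\<lambda>h. c * G' (- h))) (at x)"
    by (rule has_derivative_mult_right)
  then show "pd1 (\<lambda>x. c * G (y - x)) x = - c * pd1 G (y - x)"
    and "pd2 (\<lambda>x. c * G (y - x)) x = - c * pd2 G (y - x)"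
    using pd1_pd2_eq_derivative[OF G'] linear_neg[OF has_derivative_linear[OF G']]
    by (simp_all add: pd1_pd2_eq_derivative)
qed

lemma pd_translate:
  assumes "G differentiable (at (x + k))"
  shows "pd1 (\<lambda>x. G (x + k)) x = pd1 G (x + k)" and "pd2 (\<lambda>x. G (x + k)) x = pd2 G (x + k)"
proof -
  obtain G' where G': "(G has_derivative G') (at (x + k))"
    using assms unfolding differentiable_def by blast
  have "((\<lambda>x. x + k) has_derivative (\<lambda>h. h)) (at x)"
    by (auto intro!: derivative_eq_intros)
  from has_derivative_compose[OF this G'] show
    "pd1 (\<lambda>x. G (x + k)) x = pd1 G (x + k)" and "pd2 (\<lambda>x. G (x + k)) x = pd2 G (x + k)"
    using pd1_pd2_eq_derivative[OF G'] by (simp_all add: pd1_pd2_eq_derivative)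
qed

lemma continuous_on_if_differentiable: "(\<And>p. G differentiable (at p)) \<Longrightarrow> continuous_on S G"
  by (intro continuous_at_imp_continuous_on ballI differentiable_imp_continuous_within) auto

lemma has_vector_derivative_pd:
  assumes "G differentiable (at p)"
  shows "((\<lambda>s. G (s, snd p)) has_vector_derivative pd1 G p) (at (fst p))"
    and "((\<lambda>s. G (fst p, s)) has_vector_derivative pd2 G p) (at (snd p))"
proof -
  obtain G' where "(G has_derivative G') (at p)"
    using assms unfolding differentiable_def by blast
  from has_vector_derivative_lines[OF this] pd1_pd2_eq_derivative[OF this] show
    "((\<lambda>s. G (s, snd p)) has_vector_derivative pd1 G p) (at (fst p))"
    "((\<lambda>s. G (fst p, s)) has_vector_derivative pd2 G p) (at (snd p))"
    by simp_all
qed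

section \<open>The Hermite functionals and the least space\<close>

lemma poly2_eval_monom2: "poly2_eval (monom2 a) = (\<lambda>x. complex_of_real (fst x ^ fst a * snd x ^ snd a))"
proof
  fix x
  have "{b. monom2 a b \<noteq> 0} = {a}"
    by (auto simp: monom2_def)
  then show "poly2_eval (monom2 a) x = complex_of_real (fst x ^ fst a * snd x ^ snd a)"
    unfolding poly2_eval_def by (simp add: monom2_def)
qed

lemma differentiable_poly2_eval_monom2: "poly2_eval (monom2 a) differentiable (at p)"
  unfolding poly2_eval_monom2 by (rule differentiable_poly_fun2[OF poly_fun2_monomial])

lemma poly2_eval_monom2_Suc:
  "poly2_eval (monom2 (Suc i, j)) = (\<lambda>x. complex_of_real (fst x) * poly2_eval (monom2 (i, j)) x)"
  "poly2_eval (monom2 (i, Suc j)) = (\<lambda>x. complex_of_real (snd x) * poly2_eval (monom2 (i, j)) x)"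
  unfolding poly2_eval_monom2 by (simp_all add: fun_eq_iff)

context
  fixes z :: "nat \<Rightarrow> real \<times> real" and N :: nat
begin

definition hermite_fun ::
  "(nat \<Rightarrow> complex) \<Rightarrow> (nat \<Rightarrow> complex) \<Rightarrow> (nat \<Rightarrow> complex) \<Rightarrow> (real \<times> real \<Rightarrow> complex) \<Rightarrow> complex"
  where "hermite_fun u v w F = (\<Sum>i<N. u i * F (z i) + v i * pd1 F (z i) + w i * pd2 F (z i))"

lemma hermite_fun_add:
  assumes "\<And>p. F differentiable (at p)" "\<And>p. G differentiable (at p)"
  shows "hermite_fun u v w (\<lambda>x. F x + G x) = hermite_fun u v w F + hermite_fun u v w G"
  unfolding hermite_fun_def pd_add[OF assms] by (simp add: sum.distrib[symmetric] algebra_simps)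

lemma hermite_fun_cmult:
  assumes "\<And>p. F differentiable (at p)"
  shows "hermite_fun u v w (\<lambda>x. c * F x) = c * hermite_fun u v w F"
  unfolding hermite_fun_def pd_mult[OF differentiable_const assms] pd_const
  by (simp add: sum_distrib_left algebra_simps)

lemma hermite_fun_mult_fst:
  assumes "\<And>p. F differentiable (at p)"
  shows "hermite_fun u v w (\<lambda>x. complex_of_real (fst x) * F x) =
    hermite_fun (\<lambda>i. u i * fst (z i) + v i) (\<lambda>i. v i * fst (z i)) (\<lambda>i. w i * fst (z i)) F"
proof -
  have coord: "(\<lambda>x. complex_of_real (fst x)) differentiable (at p)" for p
    by (auto intro!: differentiableI derivative_eq_intros)
  show ?thesis
    unfolding hermite_fun_def pd_mult[OF coord assms] using pd_affine[of 1 0 0]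
    by (intro sum.cong) (simp_all add: algebra_simps)
qed

lemma hermite_fun_mult_snd:
  assumes "\<And>p. F differentiable (at p)"
  shows "hermite_fun u v w (\<lambda>x. complex_of_real (snd x) * F x) =
    hermite_fun (\<lambda>i. u i * snd (z i) + w i) (\<lambda>i. v i * snd (z i)) (\<lambda>i. w i * snd (z i)) F"
proof -
  have coord: "(\<lambda>x. complex_of_real (snd x)) differentiable (at p)" for p
    by (auto intro!: differentiableI derivative_eq_intros)
  show ?thesis
    unfolding hermite_fun_def pd_mult[OF coord assms] using pd_affine[of 0 1 0]
    by (intro sum.cong) (simp_all add: algebra_simps)
qed

lemma hermite_fun_poly_fun2_eq_0:
  assumes "poly_fun2 d P" and "\<forall>a\<in>indices_le d. hermite_fun u v w (poly2_eval (monom2 a)) = 0"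
  shows "hermite_fun u v w (\<lambda>x. complex_of_real (P x)) = 0"
  using assms
proof (induction arbitrary: u v w rule: poly_fun2.induct)
  case (const d c)
  have "(0, 0) \<in> indices_le d"
    by (simp add: indices_le_def)
  moreover have "(\<lambda>x. complex_of_real c) = (\<lambda>x. of_real c * poly2_eval (monom2 (0, 0)) x)"
    by (simp add: poly2_eval_monom2)
  ultimately show ?case
    using const.prems hermite_fun_cmult[OF differentiable_poly2_eval_monom2] by simp
next
  case (mult_fst d P)
  note P = differentiable_poly_fun2[OF mult_fst.hyps]
  have "hermite_fun (\<lambda>i. u i * fst (z i) + v i) (\<lambda>i. v i * fst (z i)) (\<lambda>i. w i * fst (z i))
      (poly2_eval (monom2 a)) = 0" if "a \<in> indices_le d" for a
    using mult_fst.prems that hermite_fun_mult_fst[OF differentiable_poly2_eval_monom2, of u v w a]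
    by (cases a) (simp add: poly2_eval_monom2_Suc(1)[symmetric] indices_le_def)
  then show ?case
    using mult_fst.IH hermite_fun_mult_fst[OF P, of u v w] by simp
next
  case (mult_snd d P)
  note P = differentiable_poly_fun2[OF mult_snd.hyps]
  have "hermite_fun (\<lambda>i. u i * snd (z i) + w i) (\<lambda>i. v i * snd (z i)) (\<lambda>i. w i * snd (z i))
      (poly2_eval (monom2 a)) = 0" if "a \<in> indices_le d" for a
    using mult_snd.prems that hermite_fun_mult_snd[OF differentiable_poly2_eval_monom2, of u v w a]
    by (cases a) (simp add: poly2_eval_monom2_Suc(2)[symmetric] indices_le_def)
  then show ?case
    using mult_snd.IH hermite_fun_mult_snd[OF P, of u v w] by simp
next
  case (add d P Q)
  then show ?case
    using hermite_fun_add[OF differentiable_poly_fun2[OF add.hyps(1)] differentiable_poly_fun2[OF add.hyps(2)]]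
    by simp
next
  case (smult d P c)
  then show ?case
    using hermite_fun_cmult[OF differentiable_poly_fun2[OF smult.hyps], of u v w c] by simp
next
  case (Suc d P)
  then show ?case
    by (simp add: indices_le_def)
qed

lemma hermite_fun_localize:
  assumes i: "i < N" and others: "\<And>k. k < N \<Longrightarrow> k \<noteq> i \<Longrightarrow>
    F (z k) = 0 \<and> pd1 F (z k) = 0 \<and> pd2 F (z k) = 0"
  shows "hermite_fun u v w F = u i * F (z i) + v i * pd1 F (z i) + w i * pd2 F (z i)"
proof -
  have "hermite_fun u v w F = (u i * F (z i) + v i * pd1 F (z i) + w i * pd2 F (z i)) +
      (\<Sum>k\<in>{..<N} - {i}. u k * F (z k) + v k * pd1 F (z k) + w k * pd2 F (z k))"
    unfolding hermite_fun_def using i by (simp add: sum.remove)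
  also have "(\<Sum>k\<in>{..<N} - {i}. u k * F (z k) + v k * pd1 F (z k) + w k * pd2 F (z k)) = 0"
    using others by (intro sum.neutral) simp
  finally show ?thesis
    by simp
qed

definition node_form :: "nat \<Rightarrow> nat \<Rightarrow> real \<times> real \<Rightarrow> real" where
  "node_form i j x = (fst (z i) - fst (z j)) * (fst x - fst (z j)) + (snd (z i) - snd (z j)) * (snd x - snd (z j))"

definition node_bump :: "nat \<Rightarrow> real \<times> real \<Rightarrow> real" where
  "node_bump i x = (\<Prod>j\<in>{..<N} - {i}. node_form i j x * node_form i j x)"

lemma poly_fun2_node_form: "poly_fun2 1 (node_form i j)"
proof -
  have "node_form i j = (\<lambda>x. (fst (z i) - fst (z j)) * fst x + (snd (z i) - snd (z j)) * snd x
      + - ((fst (z i) - fst (z j)) * fst (z j) + (snd (z i) - snd (z j)) * snd (z j)))"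
    unfolding node_form_def by (simp add: fun_eq_iff algebra_simps)
  then show ?thesis
    by (simp only: poly_fun2_affine)
qed

lemma poly_fun2_node_form_square: "poly_fun2 2 (\<lambda>x. node_form i j x * node_form i j x)"
  using poly_fun2_mult[OF poly_fun2_node_form poly_fun2_node_form] unfolding one_add_one .

lemma poly_fun2_node_bump: "poly_fun2 (2 * card ({..<N} - {i})) (node_bump i)"
  unfolding node_bump_def by (intro poly_fun2_prod poly_fun2_node_form_square) simp

lemma poly_fun2_affine_mult_node_bump:
  assumes "i < N"
  shows "poly_fun2 (2 * N - 1) (\<lambda>x. (\<alpha> * fst x + \<beta> * snd x + \<gamma>) * node_bump i x)"
proof -
  have "poly_fun2 (1 + 2 * card ({..<N} - {i})) (\<lambda>x. (\<alpha> * fst x + \<beta> * snd x + \<gamma>) * node_bump i x)"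
    by (rule poly_fun2_mult[OF poly_fun2_affine poly_fun2_node_bump])
  moreover have "1 + 2 * card ({..<N} - {i}) = 2 * N - 1"
    using assms by simp
  ultimately show ?thesis
    by simp
qed

lemma node_bump_at_node:
  assumes "inj_on z {..<N}" and "i < N"
  shows "node_bump i (z i) \<noteq> 0"
proof -
  have "node_form i j (z i) \<noteq> 0" if "j \<in> {..<N} - {i}" for j
  proof
    assume "node_form i j (z i) = 0"
    then have "(fst (z i) - fst (z j))\<^sup>2 + (snd (z i) - snd (z j))\<^sup>2 = 0"
      unfolding node_form_def by (simp add: power2_eq_square)
    then have "z i = z j"
      by (simp add: sum_power2_eq_zero_iff prod_eq_iff)
    then show False
      using that assms unfolding inj_on_def by blast
  qed
  then show ?thesis
    unfolding node_bump_def by simp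
qed

lemma node_bump_vanish_at_other_node:
  assumes "k < N" "k \<noteq> i" and f: "poly_fun2 e f"
    and F: "F = (\<lambda>x. complex_of_real (f x * node_bump i x))"
  shows "F (z k) = 0 \<and> pd1 F (z k) = 0 \<and> pd2 F (z k) = 0"
proof -
  define S where "S x = f x * (\<Prod>j\<in>{..<N} - {i} - {k}. node_form i j x * node_form i j x)" for x
  have "poly_fun2 (e + 2 * card ({..<N} - {i} - {k})) S"
    unfolding S_def by (intro poly_fun2_mult[OF f] poly_fun2_prod poly_fun2_node_form_square) simp
  note L = differentiable_poly_fun2[OF poly_fun2_node_form, of i k "z k"]
    and S = differentiable_poly_fun2[OF this, of "z k"]
  have "F = (\<lambda>x. of_real (node_form i k x) * (of_real (node_form i k x) * of_real (S x)))"
    unfolding F S_def node_bump_def using assms(1,2)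
    by (simp add: prod.remove[of _ k] fun_eq_iff algebra_simps)
  moreover have "node_form i k (z k) = 0"
    unfolding node_form_def by simp
  ultimately show ?thesis
    using pd_vanish_square_factor[OF L S] by simp
qed

lemma hermite_fun_affine_mult_node_bump:
  fixes u v w :: "nat \<Rightarrow> complex" and f :: "real \<times> real \<Rightarrow> real" and \<alpha> \<beta> \<gamma> :: real
  assumes i: "i < N"
    and vanish: "\<forall>a\<in>indices_le (2 * N - 1). hermite_fun u v w (poly2_eval (monom2 a)) = 0"
    and f: "f = (\<lambda>x. \<alpha> * fst x + \<beta> * snd x + \<gamma>)"
  defines "Q \<equiv> node_bump i"
  shows "u i * (f (z i) * Q (z i)) + v i * (\<alpha> * Q (z i) + f (z i) * pd1 (\<lambda>x. of_real (Q x)) (z i))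
    + w i * (\<beta> * Q (z i) + f (z i) * pd2 (\<lambda>x. of_real (Q x)) (z i)) = 0"
proof -
  define R where "R x = complex_of_real (f x * Q x)" for x
  have "hermite_fun u v w R = 0"
    unfolding R_def Q_def f
    by (rule hermite_fun_poly_fun2_eq_0[OF poly_fun2_affine_mult_node_bump[OF i] vanish])
  then have "u i * R (z i) + v i * pd1 R (z i) + w i * pd2 R (z i) = 0"
    using hermite_fun_localize[OF i, of R u v w] node_bump_vanish_at_other_node[OF _ _ poly_fun2_affine]
    unfolding R_def Q_def f by simp
  moreover have "pd1 R (z i) = \<alpha> * Q (z i) + f (z i) * pd1 (\<lambda>x. of_real (Q x)) (z i)"
    "pd2 R (z i) = \<beta> * Q (z i) + f (z i) * pd2 (\<lambda>x. of_real (Q x)) (z i)"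
  proof -
    have "(\<lambda>x. complex_of_real (f x)) differentiable (at (z i))"
      unfolding f by (rule differentiable_poly_fun2[OF poly_fun2_affine])
    moreover have "(\<lambda>x. complex_of_real (Q x)) differentiable (at (z i))"
      unfolding Q_def by (rule differentiable_poly_fun2[OF poly_fun2_node_bump])
    moreover have "pd1 (\<lambda>x. complex_of_real (f x)) (z i) = \<alpha>"
      "pd2 (\<lambda>x. complex_of_real (f x)) (z i) = \<beta>"
      unfolding f by (rule pd_affine)+
    ultimately show "pd1 R (z i) = \<alpha> * Q (z i) + f (z i) * pd1 (\<lambda>x. of_real (Q x)) (z i)"
      "pd2 R (z i) = \<beta> * Q (z i) + f (z i) * pd2 (\<lambda>x. of_real (Q x)) (z i)"
      unfolding R_def of_real_mult by (simp_all add: pd_mult)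
  qed
  ultimately show ?thesis
    unfolding R_def by simp
qed

lemma hermite_fun_weights_eq_0:
  assumes inj: "inj_on z {..<N}" and i: "i < N"
    and vanish: "\<forall>a\<in>indices_le (2 * N - 1). hermite_fun u v w (poly2_eval (monom2 a)) = 0"
  shows "u i = 0 \<and> v i = 0 \<and> w i = 0"
proof -
  note key = hermite_fun_affine_mult_node_bump[OF i vanish refl]
  have "v i * node_bump i (z i) = 0"
    using key[where \<alpha> = 1 and \<beta> = 0 and \<gamma> = "- fst (z i)"] by simp
  moreover have "w i * node_bump i (z i) = 0"
    using key[where \<alpha> = 0 and \<beta> = 1 and \<gamma> = "- snd (z i)"] by simp
  moreover have "u i * node_bump i (z i) + v i * pd1 (\<lambda>x. of_real (node_bump i x)) (z i)
      + w i * pd2 (\<lambda>x. of_real (node_bump i x)) (z i) = 0"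
    using key[where \<alpha> = 0 and \<beta> = 0 and \<gamma> = 1] by simp
  ultimately show ?thesis
    using node_bump_at_node[OF inj i] by simp
qed

definition hermite_gen :: "nat \<times> nat \<Rightarrow> coeffs2" where
  "hermite_gen p = (if snd p = 0 then gF (\<lambda>q. poly2_eval q (z (fst p)))
     else if snd p = 1 then gF (\<lambda>q. pd1 (poly2_eval q) (z (fst p)))
     else gF (\<lambda>q. pd2 (poly2_eval q) (z (fst p))))"

lemma sum_hermite_gen_apply:
  "(\<Sum>p\<in>{..<N} \<times> {..<3}. cscale (c p) (hermite_gen p)) a = (\<Sum>i<N.
       c (i, 0) * gF (\<lambda>q. poly2_eval q (z i)) a
     + c (i, 1) * gF (\<lambda>q. pd1 (poly2_eval q) (z i)) a
     + c (i, 2) * gF (\<lambda>q. pd2 (poly2_eval q) (z i)) a)"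
proof -
  have "(\<Sum>p\<in>{..<N} \<times> {..<3}. cscale (c p) (hermite_gen p)) a =
      (\<Sum>p\<in>{..<N} \<times> {..<3}. c p * hermite_gen p a)"
    by (simp add: sum_fun_apply cscale_def)
  also have "\<dots> = (\<Sum>i<N. \<Sum>k<3. c (i, k) * hermite_gen (i, k) a)"
    by (subst sum.cartesian_product) (simp add: case_prod_beta')
  finally show ?thesis
    by (simp add: hermite_gen_def numeral_3_eq_3 numeral_2_eq_2 algebra_simps)
qed

lemma sum_hermite_gen_apply_eq_hermite_fun:
  "(\<Sum>p\<in>{..<N} \<times> {..<3}. cscale (c p) (hermite_gen p)) a =
    hermite_fun (\<lambda>i. c (i, 0)) (\<lambda>i. c (i, 1)) (\<lambda>i. c (i, 2)) (poly2_eval (monom2 a))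
      / of_nat (fact (fst a) * fact (snd a))"
  unfolding sum_hermite_gen_apply hermite_fun_def gF_def
  by (simp add: sum_divide_distrib add_divide_distrib)

lemma hermite_series_span_eq_range:
  "hermite_series_span z N = range (\<lambda>c. \<Sum>p\<in>{..<N} \<times> {..<3}. cscale (c p) (hermite_gen p))"
proof (intro equalityI subsetI)
  fix g assume "g \<in> hermite_series_span z N"
  then obtain u v w where g: "g = (\<lambda>a. \<Sum>i<N.
       u i * gF (\<lambda>p. poly2_eval p (z i)) a
     + v i * gF (\<lambda>p. pd1 (poly2_eval p) (z i)) a
     + w i * gF (\<lambda>p. pd2 (poly2_eval p) (z i)) a)"
    unfolding hermite_series_span_def by blast
  define c where "c p = (if snd p = 0 then u (fst p) else if snd p = 1 then v (fst p) else w (fst p))"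
    for p :: "nat \<times> nat"
  have "g = (\<Sum>p\<in>{..<N} \<times> {..<3}. cscale (c p) (hermite_gen p))"
    unfolding g fun_eq_iff sum_hermite_gen_apply by (simp add: c_def)
  then show "g \<in> range (\<lambda>c. \<Sum>p\<in>{..<N} \<times> {..<3}. cscale (c p) (hermite_gen p))"
    by blast
next
  fix g assume "g \<in> range (\<lambda>c. \<Sum>p\<in>{..<N} \<times> {..<3}. cscale (c p) (hermite_gen p))"
  then obtain c where "g = (\<Sum>p\<in>{..<N} \<times> {..<3}. cscale (c p) (hermite_gen p))"
    by blast
  then have g: "g = (\<lambda>a. \<Sum>i<N.
       c (i, 0) * gF (\<lambda>p. poly2_eval p (z i)) a
     + c (i, 1) * gF (\<lambda>p. pd1 (poly2_eval p) (z i)) a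
     + c (i, 2) * gF (\<lambda>p. pd2 (poly2_eval p) (z i)) a)"
    by (simp add: fun_eq_iff sum_hermite_gen_apply)
  show "g \<in> hermite_series_span z N"
    unfolding hermite_series_span_def by (intro CollectI exI) (rule g)
qed

lemma hermite_weights_eq_0:
  assumes inj: "inj_on z {..<N}"
    and ord: "(\<Sum>p\<in>{..<N} \<times> {..<3}. cscale (c p) (hermite_gen p)) \<in> ord_ge (Suc (2 * N - 1))"
  shows "\<forall>p\<in>{..<N} \<times> {..<3}. c p = 0"
proof -
  have "hermite_fun (\<lambda>i. c (i, 0)) (\<lambda>i. c (i, 1)) (\<lambda>i. c (i, 2)) (poly2_eval (monom2 a)) = 0"
    if "a \<in> indices_le (2 * N - 1)" for a
    using ord that unfolding ord_ge_def indices_le_def sum_hermite_gen_apply_eq_hermite_fun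
    by (cases a) (simp del: of_nat_mult)
  then have "\<forall>i<N. c (i, 0) = 0 \<and> c (i, 1) = 0 \<and> c (i, 2) = 0"
    using hermite_fun_weights_eq_0[OF inj] by blast
  moreover have "{..<3::nat} = {0, 1, 2}"
    by auto
  ultimately show ?thesis
    by auto
qed

lemma hermite_gen_inj_independent:
  assumes "inj_on z {..<N}"
  shows "inj_on hermite_gen ({..<N} \<times> {..<3})" and "cs.independent (hermite_gen ` ({..<N} \<times> {..<3}))"
proof -
  have "\<forall>p\<in>{..<N} \<times> {..<3}. c p = 0"
    if "(\<Sum>p\<in>{..<N} \<times> {..<3}. cscale (c p) (hermite_gen p)) = 0" for c
    using hermite_weights_eq_0[OF assms] that by (simp add: ord_ge_def)
  then show "inj_on hermite_gen ({..<N} \<times> {..<3})"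
    and "cs.independent (hermite_gen ` ({..<N} \<times> {..<3}))"
    by (intro cs.inj_on_independent_image_if_coeffs_unique; simp)+
qed

lemma hermite_series_span_eq_span:
  assumes "inj_on z {..<N}"
  shows "hermite_series_span z N = cs.span (hermite_gen ` ({..<N} \<times> {..<3}))"
  unfolding hermite_series_span_eq_range
  by (rule cs.span_image_eq_range_sum[OF _ hermite_gen_inj_independent(1)[OF assms], symmetric]) simp

lemma dim_hermite_series_span:
  assumes "inj_on z {..<N}"
  shows "cs.dim (hermite_series_span z N) = 3 * N"
  unfolding hermite_series_span_eq_span[OF assms]
    cs.dim_span_eq_card_independent[OF hermite_gen_inj_independent(2)[OF assms]]
    card_image[OF hermite_gen_inj_independent(1)[OF assms]]
  by (simp add: card_cartesian_product)

lemma hermite_series_span_ord_ge: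
  assumes "inj_on z {..<N}"
  shows "hermite_series_span z N \<inter> ord_ge (Suc (2 * N - 1)) \<subseteq> {0}"
proof
  fix g assume g: "g \<in> hermite_series_span z N \<inter> ord_ge (Suc (2 * N - 1))"
  then obtain c where c: "g = (\<Sum>p\<in>{..<N} \<times> {..<3}. cscale (c p) (hermite_gen p))"
    unfolding hermite_series_span_eq_range by blast
  then have "\<forall>p\<in>{..<N} \<times> {..<3}. c p = 0"
    using hermite_weights_eq_0[OF assms] g by blast
  then show "g \<in> {0}"
    unfolding c by (force simp: cscale_def intro: sum.neutral)
qed

end

lemma least_space_eq_span: "least_space z N = cs.span (least_terms (hermite_series_span z N))"
  unfolding least_space_def least_terms_def ..

lemma dim_least_space:
  assumes "inj_on z {..<N}"
  shows "cs.dim (least_space z N) = 3 * N"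
proof -
  have "cs.dim (least_terms (hermite_series_span z N)) = cs.dim (hermite_series_span z N)"
    using hermite_series_span_eq_span[OF assms] hermite_series_span_ord_ge[OF assms]
    by (intro dim_least_terms[of "hermite_gen z ` ({..<N} \<times> {..<3})"]) auto
  then show ?thesis
    unfolding least_space_eq_span cs.dim_span dim_hermite_series_span[OF assms] .
qed

lemma least_space_subset_deg_le:
  assumes "inj_on z {..<N}"
  shows "least_space z N \<subseteq> deg_le (2 * N - 1)"
  unfolding least_space_eq_span
  using least_terms_deg_le[OF hermite_series_span_ord_ge[OF assms]] subspace_deg_le
  by (rule cs.span_minimal)

lemma deg2_le_iff:
  assumes "h \<in> deg_le K"
  shows "deg2 h \<le> L \<longleftrightarrow> h \<in> deg_le L"
proof -
  have "{fst b + snd b | b. h b \<noteq> 0} \<subseteq> {..K}"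
    using assms unfolding deg_le_def by (auto simp: not_less[symmetric])
  then have "finite ({fst b + snd b | b. h b \<noteq> 0} \<union> {0})"
    using finite_subset[OF _ finite_atMost] by blast
  then show ?thesis
    unfolding deg2_def deg_le_def by (subst Max_le_iff) (auto simp: not_less[symmetric])
qed

lemma least_deg_bound:
  assumes "inj_on z {..<N}"
  shows "least_deg_bound z N \<le> 2 * N - 1" and "least_space z N \<subseteq> deg_le (least_deg_bound z N)"
proof -
  note deg_le = least_space_subset_deg_le[OF assms]
  then have "\<forall>h\<in>least_space z N. deg2 h \<le> 2 * N - 1"
    using deg2_le_iff by blast
  then show "least_deg_bound z N \<le> 2 * N - 1"
    unfolding least_deg_bound_def by (rule Least_le)
  from \<open>\<forall>h\<in>least_space z N. deg2 h \<le> 2 * N - 1\<close>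
  have "\<forall>h\<in>least_space z N. deg2 h \<le> least_deg_bound z N"
    unfolding least_deg_bound_def by (rule LeastI)
  then show "least_space z N \<subseteq> deg_le (least_deg_bound z N)"
    using deg_le deg2_le_iff by blast
qed

section \<open>Derivatives and Fourier coefficients of smooth periodic functions\<close>

lemma differentiable_iter_pd: "smooth2 psi \<Longrightarrow> iter_pd ds psi differentiable (at p)"
  unfolding smooth2_def differentiable_on_def by (cases p) simp

lemma iter_pd_reflect:
  assumes "smooth2 psi"
  shows "iter_pd ds (\<lambda>x. psi (y - x)) = (\<lambda>x. (-1) ^ length ds * iter_pd ds psi (y - x))"
proof (induction ds)
  case (Cons d ds)
  then show ?case
    using pd_reflect[OF differentiable_iter_pd[OF assms]] by simp
qed simp

lemma periodic2_iter_pd: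
  assumes "smooth2 psi" and "periodic2 psi"
  shows "periodic2 (iter_pd ds psi)"
proof (induction ds)
  case (Cons d ds)
  show ?case
    unfolding periodic2_def
  proof (intro allI)
    fix x k1 k2
    let ?k = "(real_of_int k1, real_of_int k2)"
    have eq: "(\<lambda>x. iter_pd ds psi (x + ?k)) = iter_pd ds psi"
      using Cons.IH unfolding periodic2_def by blast
    note translate = pd_translate[OF differentiable_iter_pd[OF assms(1), of ds], where x = x and k = ?k]
    show "iter_pd (d # ds) psi (x + ?k) = iter_pd (d # ds) psi x"
      using translate unfolding eq by simp
  qed
qed (use assms in simp)

lemma pdiff_eq_iter_pd: "pdiff a f = iter_pd (replicate (fst a) True @ replicate (snd a) False) f"
proof -
  have "iter_pd (xs @ ys) f = iter_pd xs (iter_pd ys f)" for xs ys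
    by (induction xs) auto
  moreover have "(pd1 ^^ n) g = iter_pd (replicate n True) g" "(pd2 ^^ n) g = iter_pd (replicate n False) g"
    for n g by (induction n) auto
  ultimately show ?thesis
    unfolding pdiff_def by simp
qed

lemma pdiff_reflect:
  assumes "smooth2 psi"
  shows "pdiff a (\<lambda>x. psi (y - x)) (0, 0) = (-1) ^ (fst a + snd a) * pdiff a psi y"
  unfolding pdiff_eq_iter_pd iter_pd_reflect[OF assms] by (simp add: zero_prod_def[symmetric])

lemma integral_by_parts_periodic:
  fixes f f' :: "real \<Rightarrow> complex"
  assumes f: "\<And>s. (f has_vector_derivative f' s) (at s)" and f': "continuous_on {0..1} f'"
    and periodic: "f 1 = f 0" and B: "exp B = 1"
  shows "integral {0..1} (\<lambda>s. f' s * exp (A + B * of_real s)) =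
         - B * integral {0..1} (\<lambda>s. f s * exp (A + B * of_real s))"
proof -
  define g where "g s = exp (A + B * complex_of_real s)" for s
  have "((\<lambda>w. exp (A + B * w)) has_field_derivative (exp (A + B * complex_of_real s) * B))
      (at (complex_of_real s))" for s
    by (auto intro!: derivative_eq_intros)
  from has_vector_derivative_real_field[OF this]
  have g: "(g has_vector_derivative B * g s) (at s)" for s
    unfolding g_def by (simp add: mult.commute)
  have cont_f: "continuous_on {0..1} f"
    using f by (intro continuous_at_imp_continuous_on ballI has_vector_derivative_continuous) auto
  have cont_g: "continuous_on {0..1} g"
    unfolding g_def by (intro continuous_intros)
  define I where "I = integral {0..1} (\<lambda>s. f s * g s)"
  have "((\<lambda>s. f s * g s) has_integral I) {0..1}"
    unfolding I_def by (intro integrable_integral integrable_continuous_real continuous_intros cont_f cont_g)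
  then have "((\<lambda>s. f s * (B * g s)) has_integral (B * I)) {0..1}"
    using has_integral_mult_right[of _ I _ B] by (simp add: algebra_simps)
  moreover have "g 1 = g 0"
    unfolding g_def using B by (simp add: exp_add)
  ultimately have "((\<lambda>s. f s * (B * g s)) has_integral (f 1 * g 1 - f 0 * g 0 - (- B * I))) {0..1}"
    using periodic by simp
  then have "((\<lambda>s. f' s * g s) has_integral (- B * I)) {0..1}"
    using integration_by_parts[OF bounded_bilinear_mult _ cont_f cont_g, of f' "\<lambda>s. B * g s" "- B * I"] f g
    by simp
  then show ?thesis
    unfolding g_def I_def by (rule integral_unique)
qed

definition fourier_kernel :: "nat \<times> nat \<Rightarrow> real \<times> real \<Rightarrow> complex" where
  "fourier_kernel a x = exp (- 2 * of_real pi * \<i> * of_real (real (fst a) * fst x + real (snd a) * snd x))"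

lemma fourier2_eq_integral_kernel: "fourier2 F a = integral (cbox (0, 0) (1, 1)) (\<lambda>x. F x * fourier_kernel a x)"
  unfolding fourier2_def fourier_kernel_def ..

lemma continuous_on_fourier_kernel: "continuous_on S (fourier_kernel a)"
  unfolding fourier_kernel_def by (intro continuous_intros)

lemma fourier_kernel_line:
  "fourier_kernel a (s, t) = exp ((- 2 * of_real pi * \<i> * of_real (real (snd a) * t))
     + (- 2 * of_real pi * \<i> * of_real (real (fst a))) * of_real s)"
  "fourier_kernel a (t, s) = exp ((- 2 * of_real pi * \<i> * of_real (real (fst a) * t))
     + (- 2 * of_real pi * \<i> * of_real (real (snd a))) * of_real s)"
  unfolding fourier_kernel_def by (simp_all add: algebra_simps)

lemma exp_2pi_nat: "exp (- 2 * complex_of_real pi * \<i> * complex_of_real (real n)) = 1"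
proof -
  have "exp (- 2 * complex_of_real pi * \<i> * complex_of_real (real n)) = cis (2 * pi * (- real n))"
    by (simp add: cis_conv_exp mult.commute mult.left_commute)
  also have "\<dots> = 1"
    by (rule cis_multiple_2pi) simp
  finally show ?thesis .
qed

lemma integral_unit_square_swap:
  assumes "continuous_on UNIV F"
  shows "integral (cbox (0, 0) (1, 1)) (\<lambda>x. F x * fourier_kernel a x) =
    integral (cbox 0 1) (\<lambda>x2. integral (cbox 0 1) (\<lambda>x1. F (x1, x2) * fourier_kernel a (x1, x2)))"
proof -
  have c: "continuous_on (cbox (0, 0) (1, 1)) (\<lambda>x. F x * fourier_kernel a x)"
    by (intro continuous_intros continuous_on_subset[OF assms] continuous_on_fourier_kernel) auto
  have "integral (cbox (0, 0) (1, 1)) (\<lambda>x. F x * fourier_kernel a x) =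
    integral (cbox 0 1) (\<lambda>x1. integral (cbox 0 1) (\<lambda>x2. F (x1, x2) * fourier_kernel a (x1, x2)))"
    by (rule integral_prod_continuous[OF c])
  also have "\<dots> = integral (cbox 0 1) (\<lambda>x2. integral (cbox 0 1) (\<lambda>x1. F (x1, x2) * fourier_kernel a (x1, x2)))"
    by (rule integral_swap_continuous) (use c in \<open>simp add: case_prod_beta'\<close>)
  finally show ?thesis .
qed

lemma fourier2_pd1:
  assumes G: "\<And>p. G differentiable (at p)" and G1: "continuous_on UNIV (pd1 G)"
    and periodic: "periodic2 G"
  shows "fourier2 (pd1 G) a = 2 * complex_of_real pi * \<i> * of_nat (fst a) * fourier2 G a"
proof -
  let ?B = "- 2 * complex_of_real pi * \<i> * of_real (real (fst a))"
  have inner: "integral (cbox 0 1) (\<lambda>s. pd1 G (s, t) * fourier_kernel a (s, t)) =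
      - ?B * integral (cbox 0 1) (\<lambda>s. G (s, t) * fourier_kernel a (s, t))" for t
    unfolding cbox_interval fourier_kernel_line(1)
  proof (rule integral_by_parts_periodic)
    show "((\<lambda>s. G (s, t)) has_vector_derivative pd1 G (s, t)) (at s)" for s
      using has_vector_derivative_pd(1)[OF G, of "(s, t)"] by simp
    show "continuous_on {0..1} (\<lambda>s. pd1 G (s, t))"
      by (rule continuous_on_compose2[OF G1]) (auto intro!: continuous_intros)
    show "G (1, t) = G (0, t)"
      using periodic[unfolded periodic2_def, rule_format, of "(0, t)" 1 0] by simp
  qed (rule exp_2pi_nat)
  have "fourier2 (pd1 G) a =
      integral (cbox 0 1) (\<lambda>t. integral (cbox 0 1) (\<lambda>s. pd1 G (s, t) * fourier_kernel a (s, t)))"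
    unfolding fourier2_eq_integral_kernel by (rule integral_unit_square_swap[OF G1])
  also have "\<dots> = - ?B * integral (cbox 0 1) (\<lambda>t. integral (cbox 0 1) (\<lambda>s. G (s, t) * fourier_kernel a (s, t)))"
    unfolding inner by (rule integral_mult_right)
  also have "integral (cbox 0 1) (\<lambda>t. integral (cbox 0 1) (\<lambda>s. G (s, t) * fourier_kernel a (s, t))) = fourier2 G a"
    unfolding fourier2_eq_integral_kernel
    by (rule integral_unit_square_swap[OF continuous_on_if_differentiable[OF G], symmetric])
  finally show ?thesis
    by simp
qed

lemma fourier2_pd2:
  assumes G: "\<And>p. G differentiable (at p)" and G2: "continuous_on UNIV (pd2 G)"
    and periodic: "periodic2 G"
  shows "fourier2 (pd2 G) a = 2 * complex_of_real pi * \<i> * of_nat (snd a) * fourier2 G a"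
proof -
  let ?B = "- 2 * complex_of_real pi * \<i> * of_real (real (snd a))"
  have inner: "integral (cbox 0 1) (\<lambda>s. pd2 G (t, s) * fourier_kernel a (t, s)) =
      - ?B * integral (cbox 0 1) (\<lambda>s. G (t, s) * fourier_kernel a (t, s))" for t
    unfolding cbox_interval fourier_kernel_line(2)
  proof (rule integral_by_parts_periodic)
    show "((\<lambda>s. G (t, s)) has_vector_derivative pd2 G (t, s)) (at s)" for s
      using has_vector_derivative_pd(2)[OF G, of "(t, s)"] by simp
    show "continuous_on {0..1} (\<lambda>s. pd2 G (t, s))"
      by (rule continuous_on_compose2[OF G2]) (auto intro!: continuous_intros)
    show "G (t, 1) = G (t, 0)"
      using periodic[unfolded periodic2_def, rule_format, of "(t, 0)" 0 1] by simp
  qed (rule exp_2pi_nat)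
  have "fourier2 (pd2 G) a =
      integral (cbox 0 1) (\<lambda>t. integral (cbox 0 1) (\<lambda>s. pd2 G (t, s) * fourier_kernel a (t, s)))"
    unfolding fourier2_eq_integral_kernel
    by (rule integral_prod_continuous)
      (intro continuous_intros continuous_on_subset[OF G2] continuous_on_fourier_kernel subset_UNIV)
  also have "\<dots> = - ?B * integral (cbox 0 1) (\<lambda>t. integral (cbox 0 1) (\<lambda>s. G (t, s) * fourier_kernel a (t, s)))"
    unfolding inner by (rule integral_mult_right)
  also have "integral (cbox 0 1) (\<lambda>t. integral (cbox 0 1) (\<lambda>s. G (t, s) * fourier_kernel a (t, s))) = fourier2 G a"
    unfolding fourier2_eq_integral_kernel
    by (rule integral_prod_continuous[symmetric])
      (intro continuous_intros continuous_on_if_differentiable[OF G] continuous_on_fourier_kernel)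
  finally show ?thesis
    by simp
qed

lemma fourier2_iter_pd_Cons:
  assumes "smooth2 psi" and "periodic2 psi"
  shows "fourier2 (iter_pd (d # ds) psi) a =
    2 * complex_of_real pi * \<i> * of_nat (if d then fst a else snd a) * fourier2 (iter_pd ds psi) a"
proof -
  note G = differentiable_iter_pd[OF assms(1), of ds]
  have "continuous_on UNIV (pd1 (iter_pd ds psi))" "continuous_on UNIV (pd2 (iter_pd ds psi))"
    using continuous_on_if_differentiable[OF differentiable_iter_pd[OF assms(1), of "True # ds"]]
      continuous_on_if_differentiable[OF differentiable_iter_pd[OF assms(1), of "False # ds"]] by simp_all
  then show ?thesis
    using fourier2_pd1[OF G] fourier2_pd2[OF G] periodic2_iter_pd[OF assms] by simp
qed

lemma fourier2_pdiff:
  assumes "smooth2 psi" and "periodic2 psi"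
  shows "fourier2 (pdiff b psi) a = (2 * complex_of_real pi * \<i> * of_nat (fst a)) ^ fst b
    * (2 * complex_of_real pi * \<i> * of_nat (snd a)) ^ snd b * fourier2 psi a"
proof -
  have "fourier2 (iter_pd (replicate n False) psi) a =
      (2 * complex_of_real pi * \<i> * of_nat (snd a)) ^ n * fourier2 psi a" for n
    by (induction n) (simp_all add: fourier2_iter_pd_Cons[OF assms] del: iter_pd.simps(2))
  then have "fourier2 (iter_pd (replicate m True @ replicate n False) psi) a =
      (2 * complex_of_real pi * \<i> * of_nat (fst a)) ^ m
      * (2 * complex_of_real pi * \<i> * of_nat (snd a)) ^ n * fourier2 psi a" for m n
    by (induction m) (simp_all add: fourier2_iter_pd_Cons[OF assms] del: iter_pd.simps(2))
  then show ?thesis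
    unfolding pdiff_eq_iter_pd .
qed

lemma fourier2_sum:
  assumes "finite A" and "\<And>b. b \<in> A \<Longrightarrow> continuous_on UNIV (F b)"
  shows "fourier2 (\<lambda>y. \<Sum>b\<in>A. k b * F b y) a = (\<Sum>b\<in>A. k b * fourier2 (F b) a)"
proof -
  have "(\<lambda>x. F b x * fourier_kernel a x) integrable_on cbox (0, 0) (1, 1)" if "b \<in> A" for b
    by (intro integrable_continuous continuous_intros continuous_on_subset[OF assms(2)[OF that]]
        continuous_on_fourier_kernel) auto
  then have "integral (cbox (0, 0) (1, 1)) (\<lambda>x. \<Sum>b\<in>A. k b * (F b x * fourier_kernel a x)) =
      (\<Sum>b\<in>A. integral (cbox (0, 0) (1, 1)) (\<lambda>x. k b * (F b x * fourier_kernel a x)))"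
    by (intro integral_sum[OF assms(1)] integrable_on_mult_right) auto
  then show ?thesis
    unfolding fourier2_eq_integral_kernel by (simp add: sum_distrib_right mult.assoc integral_mult_right)
qed

section \<open>The operator h \<mapsto> h(\<partial>)\<phi>(0)\<close>

text \<open>Unlike \<open>diff_op\<close>, which sums over the
  support of \<open>h\<close>, the sum runs over all multi-indices of total degree at most \<open>L\<close>, so the map is
  linear in \<open>h\<close>; the two agree on \<open>deg_le L\<close>.\<close>

definition diff_op_phi :: "nat \<Rightarrow> (real \<times> real \<Rightarrow> complex) \<Rightarrow> coeffs2 \<Rightarrow> real \<times> real \<Rightarrow> complex" where
  "diff_op_phi L psi h = (\<lambda>y. \<Sum>b\<in>indices_le L. h b * pdiff b (\<lambda>x. psi (y - x)) (0, 0))"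

lemma linear_diff_op_phi: "Vector_Spaces.linear cscale cscale (diff_op_phi L psi)"
  unfolding Vector_Spaces.linear_iff
  by (auto simp: cs.vector_space_axioms diff_op_phi_def cscale_def fun_eq_iff sum.distrib
      sum_distrib_left algebra_simps)

lemma diff_op_eq_diff_op_phi:
  assumes "h \<in> deg_le L"
  shows "(\<lambda>y. diff_op h (\<lambda>x. psi (y - x)) (0, 0)) = diff_op_phi L psi h"
  unfolding diff_op_def diff_op_phi_def
  by (intro ext sum.mono_neutral_left[OF finite_indices_le support_deg_le[OF assms]]) auto

lemma fourier2_diff_op_phi:
  assumes "smooth2 psi" and "periodic2 psi" and "h \<in> deg_le L"
  shows "fourier2 (diff_op_phi L psi h) a =
    fourier2 psi a * cpoly_eval h (- 2 * pi * \<i> * of_nat (fst a), - 2 * pi * \<i> * of_nat (snd a))"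
proof -
  have cont: "continuous_on UNIV (pdiff b psi)" for b
    unfolding pdiff_eq_iter_pd by (rule continuous_on_if_differentiable[OF differentiable_iter_pd[OF assms(1)]])
  have "fourier2 (diff_op_phi L psi h) a =
      (\<Sum>b\<in>indices_le L. (h b * (-1) ^ (fst b + snd b)) * fourier2 (pdiff b psi) a)"
    unfolding diff_op_phi_def pdiff_reflect[OF assms(1)] mult.assoc[symmetric]
    by (rule fourier2_sum[OF finite_indices_le cont])
  also have "\<dots> = fourier2 psi a * cpoly_eval h (- 2 * pi * \<i> * of_nat (fst a), - 2 * pi * \<i> * of_nat (snd a))"
    unfolding cpoly_eval_deg_le[OF assms(3)] fourier2_pdiff[OF assms(1,2)] sum_distrib_left
    by (rule sum.cong) (simp_all add: power_mult_distrib power_minus[of "_ * _"] power_add algebra_simps)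
  finally show ?thesis .
qed

lemma eq_0_if_diff_op_phi_eq_0:
  assumes "smooth2 psi" and "periodic2 psi"
    and fourier: "\<forall>a. fst a + snd a \<le> L \<longrightarrow> fourier2 psi a \<noteq> 0"
    and h: "h \<in> deg_le L" and zero: "diff_op_phi L psi h = 0"
  shows "h = 0"
proof (rule deg_le_eq_0_if_vanish_on_triangle[OF _ h])
  show "- 2 * complex_of_real pi * \<i> \<noteq> 0"
    by simp
  fix k l assume "k + l \<le> L"
  moreover have "fourier2 (diff_op_phi L psi h) (k, l) = 0"
    unfolding zero fourier2_def by simp
  ultimately show "cpoly_eval h (- 2 * complex_of_real pi * \<i> * of_nat k, - 2 * complex_of_real pi * \<i> * of_nat l) = 0"
    using fourier2_diff_op_phi[OF assms(1,2) h, of "(k, l)"] fourier by simp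
qed

theorem mainTheorem3:
  fixes psi :: "real \<times> real \<Rightarrow> complex"
    and z :: "nat \<Rightarrow> real \<times> real"
    and N :: nat
  assumes "smooth2 psi"
    and "periodic2 psi"
    and "\<forall>i<N. z i \<in> {0..<1} \<times> {0..<1}"
    and "inj_on z {..<N}"
    and "\<forall>a. fst a + snd a \<le> least_deg_bound z N \<longrightarrow> fourier2 psi a \<noteq> 0"
  shows "Vector_Spaces.vector_space.dim cscale
           {(\<lambda>y. diff_op h (\<lambda>x. psi (y - x)) (0, 0)) | h. h \<in> least_space z N} = 3 * N
       \<and> least_deg_bound z N \<le> 2 * N - 1"
proof -
  define L where "L = least_deg_bound z N"
  define S where "S = least_space z N"
  have S: "cs.subspace S" "S \<subseteq> deg_le L"
    unfolding S_def L_def least_space_eq_span using least_deg_bound(2)[OF assms(4)]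
    by (simp_all add: least_space_eq_span)
  have "{(\<lambda>y. diff_op h (\<lambda>x. psi (y - x)) (0, 0)) | h. h \<in> S} = diff_op_phi L psi ` S"
    unfolding setcompr_eq_image using diff_op_eq_diff_op_phi S(2) by (intro image_cong) auto
  moreover have "inj_on (diff_op_phi L psi) (cs.span S)"
  proof (rule module_hom.inj_on_iff_eq_0[THEN iffD2, OF _ cs.subspace_span], safe)
    show "module_hom cscale cscale (diff_op_phi L psi)"
      using linear_diff_op_phi module_hom_eq_linear by metis
    fix h assume "h \<in> cs.span S" and zero: "diff_op_phi L psi h = 0"
    then have "h \<in> deg_le L"
      using S cs.span_eq_iff by blast
    then show "h = 0"
      using eq_0_if_diff_op_phi_eq_0[OF assms(1,2) _ _ zero] assms(5) unfolding L_def by blast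
  qed
  ultimately have "Vector_Spaces.vector_space.dim cscale
      {(\<lambda>y. diff_op h (\<lambda>x. psi (y - x)) (0, 0)) | h. h \<in> S} = cs.dim S"
    using vector_space_pair.dim_image_eq_inj_on_span[OF _ linear_diff_op_phi] cs.vector_space_axioms
    by (metis vector_space_pair.intro)
  then show ?thesis
    using dim_least_space[OF assms(4)] least_deg_bound(1)[OF assms(4)] unfolding S_def by simp
qed

end
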